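(* Consider the setting and certainty-equivalent controller described in the context. Then the loss function $$\Psi(\pi)=\mathbb{E}\Big[\sum_{k=0}^N \theta\delta_k+\|e_k\|^2_{\Gamma_k}\Big],$$ with $\theta=\ell(1-\lambda)/\lambda$, $e_k=x_k-\hat{x}_k$ and $\Gamma_k=A^TS_{k+1}B(B^TS_{k+1}B+R)^{-1}B^TS_{k+1}A$, is equivalent to the loss function $$\Phi(\pi)=\mathbb{E}\Big[\frac{1-\lambda}{N+1}\sum_{k=0}^N\ell\delta_k+\frac{\lambda}{N+1}\sum_{k=0}^N\big(\|x_{k+1}\|^2_Q+\|u_k\|^2_R\big)\Big],$$ in the sense that minimizing $\Psi$ over admissible triggering policies $\pi\in\mathcal{P}$ is equivalent to minimizing $\Phi$ over $\mathcal{P}$.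
   Context: Let $n,m\ge 1$, $N\in\mathbb{N}$, $\mathcal{K}=\{0,1,\dots,N\}$. A process evolves as $x_{k+1}=Ax_k+Bu_k+w_k$ with output $y_k=x_{k-\tau_k}$, where $A\in\mathbb{R}^{n\times n}$, $B\in\mathbb{R}^{n\times m}$, $w_k$ is Gaussian white noise with zero mean and covariance $W\succ0$, $x_0$ is Gaussian with mean $m_0$ and covariance $M_0$, $\tau_k\in\mathbb{N}_0$ are random delays with known distribution and $\tau_0=0$, all mutually independent. An event trigger chooses $\delta_k\in\{0,1\}$ (transmission to the controller, received at time $k+1$). Ages of information: at the event trigger $\zeta_0=0$, $\zeta_k=\tau_k$ if $\tau_k<\zeta_{k-1}+1$ and $\zeta_k=\zeta_{k-1}+1$ otherwise; at the controller $\eta_0=\infty$, $\eta_k=\zeta_{k-1}+1$ if $\delta_{k-1}=1$ and $\eta_k=\eta_{k-1}+1$ otherwise. The event trigger's information set is $\mathcal{I}^e_k=\{x_{t-\zeta_t},x_{t-\eta_t},\delta_s,u_s : 0\le t\le k,\ 0\le s<k\}$ (infinite-age entries void); $\mathcal{P}$ is the set of admissible triggering policies $\pi=\{\mathbb{P}(\delta_k\mid\mathcal{I}^e_k)\}_{k=0}^N$ (Borel measurable transition kernels). Let $\lambda\in(0,1)$, $\ell$ a weighting coefficient, $Q\succeq0$, $R\succ0$, $\|z\|^2_M=z^TMz$, $S_{N+1}=Q$, $S_k=Q+A^TS_{k+1}A-A^TS_{k+1}B(B^TS_{k+1}B+R)^{-1}B^TS_{k+1}A$ for $k\in\mathcal{K}$,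 $L_k=(B^TS_{k+1}B+R)^{-1}B^TS_{k+1}A$. The controller applies $u_k=-L_k\hat{x}_k$, where $\hat{x}_0=m_0$ and $\hat{x}_{k+1}=A^{\zeta_k+1}x_{k-\zeta_k}+\sum_{t=0}^{\zeta_k}A^tBu_{k-t}$ if $\delta_k=1$, and $\hat{x}_{k+1}=A\hat{x}_k+Bu_k$ if $\delta_k=0$. *)

theory Defs
  imports "HOL-Probability.Probability"
begin

definition qf :: "real^'n^'n \<Rightarrow> real^'n \<Rightarrow> real" where
  "qf P z = z \<bullet> (P *v z)"

definition mpow :: "real^'n^'n \<Rightarrow> nat \<Rightarrow> real^'n^'n" where
  "mpow A t = (((**) A) ^^ t) (mat 1)"

text \<open>Riccati recursion: S_{N+1} = Q, S_k = ric_step S_{k+1}.\<close>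
definition ric_step :: "real^'n^'n \<Rightarrow> real^'m^'n \<Rightarrow> real^'n^'n \<Rightarrow> real^'m^'m \<Rightarrow> real^'n^'n \<Rightarrow> real^'n^'n" where
  "ric_step A B Q R S = Q + transpose A ** S ** A
     - transpose A ** S ** B ** matrix_inv (transpose B ** S ** B + R) ** transpose B ** S ** A"

primrec ric_back :: "real^'n^'n \<Rightarrow> real^'m^'n \<Rightarrow> real^'n^'n \<Rightarrow> real^'m^'m \<Rightarrow> nat \<Rightarrow> real^'n^'n" where
  "ric_back A B Q R 0 = Q"
| "ric_back A B Q R (Suc j) = ric_step A B Q R (ric_back A B Q R j)"

definition riccS :: "real^'n^'n \<Rightarrow> real^'m^'n \<Rightarrow> real^'n^'n \<Rightarrow> real^'m^'m \<Rightarrow> nat \<Rightarrow> nat \<Rightarrow> real^'n^'n" where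
  "riccS A B Q R N k = ric_back A B Q R (N + 1 - k)"

definition gainL :: "real^'n^'n \<Rightarrow> real^'m^'n \<Rightarrow> real^'n^'n \<Rightarrow> real^'m^'m \<Rightarrow> nat \<Rightarrow> nat \<Rightarrow> real^'n^'m" where
  "gainL A B Q R N k = (let S = riccS A B Q R N (Suc k) in
     matrix_inv (transpose B ** S ** B + R) ** transpose B ** S ** A)"

definition Gam :: "real^'n^'n \<Rightarrow> real^'m^'n \<Rightarrow> real^'n^'n \<Rightarrow> real^'m^'m \<Rightarrow> nat \<Rightarrow> nat \<Rightarrow> real^'n^'n" where
  "Gam A B Q R N k = (let S = riccS A B Q R N (Suc k) in
     transpose A ** S ** B ** matrix_inv (transpose B ** S ** B + R) ** transpose B ** S ** A)"

text \<open>Age of information at the event trigger (depends only on the delays).\<close>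
fun zeta :: "(nat \<Rightarrow> nat) \<Rightarrow> nat \<Rightarrow> nat" where
  "zeta tau 0 = 0"
| "zeta tau (Suc k) = (if tau (Suc k) < zeta tau k + 1 then tau (Suc k) else zeta tau k + 1)"

text \<open>History of the closed loop: states, estimates, inputs, triggering decisions, controller ages.\<close>
record ('n::finite, 'm::finite) hist =
  hx :: "nat \<Rightarrow> real^'n"
  hxh :: "nat \<Rightarrow> real^'n"
  hu :: "nat \<Rightarrow> real^'m"
  hd :: "nat \<Rightarrow> bool"
  heta :: "nat \<Rightarrow> enat"

type_synonym ('n, 'm) infoval = "((nat \<times> (real^'n)) \<times> (enat \<times> (real^'n))) \<times> (bool \<times> (real^'m))"

text \<open>Measurable space of the information set of the event trigger (entries indexed by time,
  padded with default values outside the time range available at time k).\<close>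
definition info_space :: "(nat \<Rightarrow> ('n::finite, 'm::finite) infoval) measure" where
  "info_space = PiM UNIV (\<lambda>_.
     (((count_space UNIV) \<Otimes>\<^sub>M (borel :: (real^'n) measure)) \<Otimes>\<^sub>M ((count_space UNIV) \<Otimes>\<^sub>M (borel :: (real^'n) measure)))
      \<Otimes>\<^sub>M ((count_space UNIV) \<Otimes>\<^sub>M (borel :: (real^'m) measure)))"

text \<open>Information set I^e_k: (zeta_t, x_{t - zeta_t}) and (eta_t, x_{t - eta_t}) for t \<le> k
  (value 0 when eta_t = \<infinity>), delta_s and u_s for s < k.\<close>
definition info_of :: "(nat \<Rightarrow> nat) \<Rightarrow> ('n::finite, 'm::finite) hist \<Rightarrow> nat \<Rightarrow> nat \<Rightarrow> ('n, 'm) infoval" where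
  "info_of tau h k i =
    ((if i \<le> k then (zeta tau i, hx h (i - zeta tau i)) else (0, 0),
      if i \<le> k then (heta h i, if heta h i = \<infinity> then 0 else hx h (i - the_enat (heta h i))) else (0, 0)),
     (if i < k then hd h i else False, if i < k then hu h i else 0))"

text \<open>One step of the closed loop at time k. The randomised triggering decision is realised as
  delta_k = (v_k < p k I_k) with v_k uniform on [0,1], so that P(delta_k = 1 | I_k) = p k I_k.\<close>
definition sys_step :: "real^'n^'n \<Rightarrow> real^'m^'n \<Rightarrow> (nat \<Rightarrow> real^'n^'m) \<Rightarrow> (nat \<Rightarrow> real^'n)
   \<Rightarrow> (nat \<Rightarrow> nat) \<Rightarrow> (nat \<Rightarrow> real) \<Rightarrow> (nat \<Rightarrow> (nat \<Rightarrow> ('n::finite, 'm::finite) infoval) \<Rightarrow> real)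
   \<Rightarrow> ('n, 'm) hist \<Rightarrow> nat \<Rightarrow> ('n, 'm) hist" where
  "sys_step A B L w tau v p h k =
    (let u = - (L k *v hxh h k);
         us = (hu h)(k := u);
         d = (v k < p k (info_of tau h k));
         z = zeta tau k;
         xn = A *v hx h k + B *v u + w k;
         xhn = (if d then mpow A (z + 1) *v hx h (k - z) + (\<Sum>t\<le>z. mpow A t *v (B *v us (k - t)))
                else A *v hxh h k + B *v u);
         en = (if d then enat (z + 1) else heta h k + 1)
     in h\<lparr>hx := (hx h)(Suc k := xn), hxh := (hxh h)(Suc k := xhn), hu := us,
          hd := (hd h)(k := d), heta := (heta h)(Suc k := en)\<rparr>)"

definition hist_init :: "real^'n \<Rightarrow> real^'n \<Rightarrow> ('n::finite, 'm::finite) hist" where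
  "hist_init m0 x0 = \<lparr>hx = (\<lambda>_. 0)(0 := x0), hxh = (\<lambda>_. 0)(0 := m0), hu = (\<lambda>_. 0),
                      hd = (\<lambda>_. False), heta = (\<lambda>_. 0)(0 := \<infinity>)\<rparr>"

primrec run :: "real^'n^'n \<Rightarrow> real^'m^'n \<Rightarrow> (nat \<Rightarrow> real^'n^'m) \<Rightarrow> real^'n \<Rightarrow> real^'n \<Rightarrow> (nat \<Rightarrow> real^'n)
   \<Rightarrow> (nat \<Rightarrow> nat) \<Rightarrow> (nat \<Rightarrow> real) \<Rightarrow> (nat \<Rightarrow> (nat \<Rightarrow> ('n::finite, 'm::finite) infoval) \<Rightarrow> real)
   \<Rightarrow> nat \<Rightarrow> ('n, 'm) hist" where
  "run A B L m0 x0 w tau v p 0 = hist_init m0 x0"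
| "run A B L m0 x0 w tau v p (Suc k) = sys_step A B L w tau v p (run A B L m0 x0 w tau v p k) k"

definition traj :: "real^'n^'n \<Rightarrow> real^'m^'n \<Rightarrow> real^'n^'n \<Rightarrow> real^'m^'m \<Rightarrow> nat \<Rightarrow> real^'n
   \<Rightarrow> ('w \<Rightarrow> real^'n) \<Rightarrow> (nat \<Rightarrow> 'w \<Rightarrow> real^'n) \<Rightarrow> (nat \<Rightarrow> 'w \<Rightarrow> nat) \<Rightarrow> (nat \<Rightarrow> 'w \<Rightarrow> real)
   \<Rightarrow> (nat \<Rightarrow> (nat \<Rightarrow> ('n::finite, 'm::finite) infoval) \<Rightarrow> real) \<Rightarrow> 'w \<Rightarrow> ('n, 'm) hist" where
  "traj A B Q R N m0 X0 Wn Tau V p \<omega> =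
     run A B (gainL A B Q R N) m0 (X0 \<omega>) (\<lambda>k. Wn k \<omega>) (\<lambda>k. Tau k \<omega>) (\<lambda>k. V k \<omega>) p (Suc N)"

text \<open>Admissible (randomised, Borel measurable) triggering policies: p k I = P(delta_k = 1 | I^e_k = I).\<close>
definition admissible :: "nat \<Rightarrow> (nat \<Rightarrow> (nat \<Rightarrow> ('n::finite, 'm::finite) infoval) \<Rightarrow> real) set" where
  "admissible N = {p. \<forall>k\<le>N. p k \<in> borel_measurable info_space \<and> (\<forall>I. 0 \<le> p k I \<and> p k I \<le> 1)}"

text \<open>Gaussian random vector with mean mu and covariance C (all one-dimensional projections normal).\<close>
definition gaussian_vec :: "'a measure \<Rightarrow> ('a \<Rightarrow> real^'n) \<Rightarrow> real^'n \<Rightarrow> real^'n^'n \<Rightarrow> bool" where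
  "gaussian_vec M X mu C \<longleftrightarrow> X \<in> borel_measurable M \<and>
     (\<forall>c. (0 < qf C c \<longrightarrow> distributed M lborel (\<lambda>\<omega>. c \<bullet> X \<omega>)
                                  (\<lambda>x. ennreal (normal_density (c \<bullet> mu) (sqrt (qf C c)) x)))
        \<and> (qf C c = 0 \<longrightarrow> (AE \<omega> in M. c \<bullet> X \<omega> = c \<bullet> mu)))"

datatype src = SX0 | SW nat | STau nat | SV nat

definition rv_events :: "'a measure \<Rightarrow> 'b measure \<Rightarrow> ('a \<Rightarrow> 'b) \<Rightarrow> 'a set set" where
  "rv_events M N X = {X -` A \<inter> space M | A. A \<in> sets N}"

definition src_events :: "'a measure \<Rightarrow> ('a \<Rightarrow> real^'n) \<Rightarrow> (nat \<Rightarrow> 'a \<Rightarrow> real^'n) \<Rightarrow> (nat \<Rightarrow> 'a \<Rightarrow> nat)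
    \<Rightarrow> (nat \<Rightarrow> 'a \<Rightarrow> real) \<Rightarrow> src \<Rightarrow> 'a set set" where
  "src_events M X0 Wn Tau V i = (case i of
      SX0 \<Rightarrow> rv_events M borel X0
    | SW k \<Rightarrow> rv_events M borel (Wn k)
    | STau k \<Rightarrow> rv_events M (count_space UNIV) (Tau k)
    | SV k \<Rightarrow> rv_events M borel (V k))"

definition Psi :: "'w measure \<Rightarrow> real^'n^'n \<Rightarrow> real^'m^'n \<Rightarrow> real^'n^'n \<Rightarrow> real^'m^'m \<Rightarrow> nat \<Rightarrow> real \<Rightarrow> real
   \<Rightarrow> real^'n \<Rightarrow> ('w \<Rightarrow> real^'n) \<Rightarrow> (nat \<Rightarrow> 'w \<Rightarrow> real^'n) \<Rightarrow> (nat \<Rightarrow> 'w \<Rightarrow> nat) \<Rightarrow> (nat \<Rightarrow> 'w \<Rightarrow> real)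
   \<Rightarrow> (nat \<Rightarrow> (nat \<Rightarrow> ('n::finite, 'm::finite) infoval) \<Rightarrow> real) \<Rightarrow> real" where
  "Psi M A B Q R N lam ell m0 X0 Wn Tau V p =
     (let \<theta> = ell * (1 - lam) / lam in
      \<integral>\<omega>. (let h = traj A B Q R N m0 X0 Wn Tau V p \<omega> in
             \<Sum>k\<le>N. \<theta> * of_bool (hd h k) + qf (Gam A B Q R N k) (hx h k - hxh h k)) \<partial>M)"

definition Phi :: "'w measure \<Rightarrow> real^'n^'n \<Rightarrow> real^'m^'n \<Rightarrow> real^'n^'n \<Rightarrow> real^'m^'m \<Rightarrow> nat \<Rightarrow> real \<Rightarrow> real
   \<Rightarrow> real^'n \<Rightarrow> ('w \<Rightarrow> real^'n) \<Rightarrow> (nat \<Rightarrow> 'w \<Rightarrow> real^'n) \<Rightarrow> (nat \<Rightarrow> 'w \<Rightarrow> nat) \<Rightarrow> (nat \<Rightarrow> 'w \<Rightarrow> real)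
   \<Rightarrow> (nat \<Rightarrow> (nat \<Rightarrow> ('n::finite, 'm::finite) infoval) \<Rightarrow> real) \<Rightarrow> real" where
  "Phi M A B Q R N lam ell m0 X0 Wn Tau V p =
      (\<integral>\<omega>. (let h = traj A B Q R N m0 X0 Wn Tau V p \<omega> in
             (1 - lam) / real (N + 1) * (\<Sum>k\<le>N. ell * of_bool (hd h k))
           + lam / real (N + 1) * (\<Sum>k\<le>N. qf Q (hx h (Suc k)) + qf R (hu h k))) \<partial>M)"

end

theory Submission
  imports Defs
begin

(* Completing the square in the Riccati recursion shows that along every closed-loop trajectory
     sum_k (|x_(k+1)|_Q^2 + |u_k|_R^2)
       = x_0^T (S_0 - Q) x_0 + sum_k (|e_k|_(Gamma_k)^2 + w_k^T S_(k+1) w_k + 2 w_k^T S_(k+1) (A x_k + B u_k)).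
   The state x_k and the input u_k are generated by the initial state, the delays, the randomisation
   of the trigger and the noise before time k, all independent of the centred noise w_k, so the cross
   terms vanish in expectation. Hence Phi = lambda/(N+1) * Psi + c with c independent of the
   triggering policy, and the two losses have the same minimisers. Every signal of the loop depends
   linearly on x_0 and the noise, with coefficients ranging over finitely many matrices, which gives
   the integrability needed to split the expectations. *)

section \<open>Quadratic forms and the Riccati recursion\<close>

lemma qf_add_matrix: "qf (P + P') z = qf P z + qf P' z"
  by (simp add: qf_def matrix_vector_mult_add_rdistrib inner_add_right)

lemma qf_diff_matrix: "qf (P - P') z = qf P z - qf P' z"
  by (simp add: qf_def matrix_vector_mult_diff_rdistrib inner_diff_right)

lemma transpose_add: "transpose (X + Y) = transpose X + transpose (Y :: 'a::plus^'n^'m)"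
  by (simp add: transpose_def vec_eq_iff)

lemma transpose_diff: "transpose (X - Y) = transpose X - transpose (Y :: 'a::minus^'n^'m)"
  by (simp add: transpose_def vec_eq_iff)

lemma inner_matrix_vector_transpose: "(a :: real^'m) \<bullet> ((M :: real^'n^'m) *v b) = (transpose M *v a) \<bullet> b"
  by (simp add: dot_lmul_matrix transpose_matrix_vector)

lemma inner_symmetric_matrix: "transpose (S :: real^'n^'n) = S \<Longrightarrow> a \<bullet> (S *v b) = b \<bullet> (S *v a)"
  by (metis inner_matrix_vector_transpose inner_commute)

lemma qf_transpose_mult: "qf (transpose A ** S ** A) x = qf S (A *v x)"
  unfolding qf_def matrix_mul_assoc[symmetric] matrix_vector_mul_assoc[symmetric]
  by (metis inner_matrix_vector_transpose transpose_transpose)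

definition psd_matrix :: "real^'n^'n \<Rightarrow> bool" where
  "psd_matrix S \<longleftrightarrow> transpose S = S \<and> (\<forall>z. 0 \<le> qf S z)"

lemma invertible_weighted_gram_plus:
  fixes B :: "real^'m^'n" and S :: "real^'n^'n" and R :: "real^'m^'m"
  assumes S: "\<forall>z. 0 \<le> qf S z" and R: "\<forall>z. z \<noteq> 0 \<longrightarrow> 0 < qf R z"
  shows "invertible (transpose B ** S ** B + R)"
proof -
  have "z = 0" if z: "(transpose B ** S ** B + R) *v z = 0" for z
  proof -
    have "qf (transpose B ** S ** B + R) z = 0" using z by (simp add: qf_def)
    then have "qf S (B *v z) + qf R z = 0" by (simp add: qf_add_matrix qf_transpose_mult)
    with S have "qf R z \<le> 0" by (metis le_add_same_cancel2)
    with R show "z = 0" by (meson not_le)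
  qed
  then show ?thesis
    using matrix_left_invertible_ker invertible_left_inverse by blast
qed

lemma matrix_inv_right:
  fixes P :: "'a::semiring_1^'n^'m"
  assumes "invertible P"
  shows "P ** matrix_inv P = mat 1"
  using someI_ex[OF assms[unfolded invertible_def]] unfolding matrix_inv_def by blast

lemma matrix_inv_symmetric:
  fixes P :: "'a::comm_semiring_1^'m^'m"
  assumes "invertible P" "transpose P = P"
  shows "transpose (matrix_inv P) = matrix_inv P"
proof -
  let ?G = "matrix_inv P"
  have PG: "P ** ?G = mat 1" by (rule matrix_inv_right[OF assms(1)])
  have "transpose (P ** ?G) = mat 1" by (simp add: PG)
  then have GtP: "transpose ?G ** P = mat 1" by (simp add: matrix_transpose_mul assms(2))
  have "transpose ?G = (transpose ?G ** P) ** ?G" by (simp add: PG flip: matrix_mul_assoc)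
  then show ?thesis by (simp add: GtP)
qed

lemma qf_completion_of_squares:
  fixes A :: "real^'n^'n" and B :: "real^'m^'n" and S :: "real^'n^'n" and R :: "real^'m^'m"
  assumes S: "transpose S = S" and R: "transpose R = R"
    and PG: "(transpose B ** S ** B + R) ** G = mat 1"
  shows "qf S (A *v x + B *v u) + qf R u =
     qf (transpose A ** S ** A) x - qf (transpose A ** S ** B ** G ** transpose B ** S ** A) x
     + qf (transpose B ** S ** B + R) (u + (G ** transpose B ** S ** A) *v x)"
proof -
  define P where "P = transpose B ** S ** B + R"
  define y where "y = transpose B *v (S *v (A *v x))"
  have P_sym: "transpose P = P"
    using S R by (simp add: P_def matrix_transpose_mul matrix_mul_assoc transpose_add)
  have PGy: "P *v (G *v y) = y"
    using PG by (simp add: P_def matrix_vector_mul_assoc)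
  have Lx: "(G ** transpose B ** S ** A) *v x = G *v y"
    by (simp add: y_def matrix_vector_mul_assoc matrix_mul_assoc)
  have cross: "(B *v u) \<bullet> (S *v (A *v x)) = u \<bullet> y"
    by (metis inner_matrix_vector_transpose inner_commute y_def)
  have gain: "qf (transpose A ** S ** B ** G ** transpose B ** S ** A) x = y \<bullet> (G *v y)"
  proof -
    have "qf (transpose A ** S ** B ** G ** transpose B ** S ** A) x
        = x \<bullet> (transpose A *v (S *v (B *v (G *v y))))"
      by (simp add: qf_def y_def matrix_vector_mul_assoc matrix_mul_assoc)
    also have "\<dots> = (A *v x) \<bullet> (S *v (B *v (G *v y)))"
      by (metis inner_matrix_vector_transpose transpose_transpose)
    also have "\<dots> = (B *v (G *v y)) \<bullet> (S *v (A *v x))" by (rule inner_symmetric_matrix[OF S])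
    also have "\<dots> = (G *v y) \<bullet> y" by (metis inner_matrix_vector_transpose inner_commute y_def)
    finally show ?thesis by (simp add: inner_commute)
  qed
  have lhs: "qf S (A *v x + B *v u) = qf S (A *v x) + 2 * (u \<bullet> y) + qf S (B *v u)"
    using inner_symmetric_matrix[OF S, of "A *v x" "B *v u"] cross
    by (simp add: qf_def matrix_vector_right_distrib inner_add_left inner_add_right)
  have rhs: "qf P (u + G *v y) = qf P u + 2 * (u \<bullet> y) + y \<bullet> (G *v y)"
    using inner_symmetric_matrix[OF P_sym, of "G *v y" u] PGy
    by (simp add: qf_def matrix_vector_right_distrib inner_add_left inner_add_right inner_commute)
  show ?thesis
    unfolding P_def[symmetric] Lx rhs gain lhs
    by (simp add: P_def qf_add_matrix qf_transpose_mult)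
qed

lemma ric_step_psd:
  fixes A :: "real^'n^'n" and B :: "real^'m^'n" and R :: "real^'m^'m"
  assumes Q: "psd_matrix Q" and R: "transpose R = R" "\<forall>z. z \<noteq> 0 \<longrightarrow> 0 < qf R z"
    and S: "psd_matrix S"
  shows "psd_matrix (ric_step A B Q R S)"
proof -
  define P where "P = transpose B ** S ** B + R"
  define G where "G = matrix_inv P"
  have inv: "invertible P"
    using invertible_weighted_gram_plus S R(2) by (auto simp: P_def psd_matrix_def)
  have P_sym: "transpose P = P"
    using S R by (simp add: P_def psd_matrix_def matrix_transpose_mul matrix_mul_assoc transpose_add)
  have G_sym: "transpose G = G"
    unfolding G_def by (rule matrix_inv_symmetric[OF inv P_sym])
  have PG: "P ** G = mat 1" unfolding G_def by (rule matrix_inv_right[OF inv])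
  have R_nonneg: "0 \<le> qf R z" for z
    using R(2) by (cases "z = 0") (auto simp: qf_def less_imp_le)
  have "transpose (ric_step A B Q R S) = ric_step A B Q R S"
    using Q S G_sym unfolding ric_step_def P_def[symmetric] G_def[symmetric] psd_matrix_def
    by (simp add: transpose_add transpose_diff matrix_transpose_mul matrix_mul_assoc)
  moreover have "0 \<le> qf (ric_step A B Q R S) z" for z
  proof -
    \<comment> \<open>the completed square vanishes at the optimal input \<open>u = -L z\<close>\<close>
    define u where "u = - ((G ** transpose B ** S ** A) *v z)"
    have "0 \<le> qf S (A *v z + B *v u) + qf R u"
      using S R_nonneg by (simp add: psd_matrix_def)
    also have "\<dots> = qf (transpose A ** S ** A) z - qf (transpose A ** S ** B ** G ** transpose B ** S ** A) z"
      using qf_completion_of_squares[of S R B G A z u] S R(1) PG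
      by (simp add: psd_matrix_def P_def u_def qf_def)
    finally have "0 \<le> qf (transpose A ** S ** A) z - qf (transpose A ** S ** B ** G ** transpose B ** S ** A) z" .
    moreover have "0 \<le> qf Q z" using Q by (simp add: psd_matrix_def)
    ultimately show ?thesis
      unfolding ric_step_def G_def[symmetric] P_def[symmetric] qf_add_matrix qf_diff_matrix by linarith
  qed
  ultimately show ?thesis by (simp add: psd_matrix_def)
qed

lemma riccS_psd:
  fixes A :: "real^'n^'n" and B :: "real^'m^'n" and R :: "real^'m^'m"
  assumes "psd_matrix Q" "transpose R = R" "\<forall>z. z \<noteq> 0 \<longrightarrow> 0 < qf R z"
  shows "psd_matrix (riccS A B Q R N k)"
proof -
  have "psd_matrix (ric_back A B Q R j)" for j
    by (induction j) (simp_all add: assms ric_step_psd)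
  then show ?thesis by (simp add: riccS_def)
qed

lemma riccS_Suc: "k \<le> N \<Longrightarrow> riccS A B Q R N k = ric_step A B Q R (riccS A B Q R N (Suc k))"
  unfolding riccS_def by (simp add: Suc_diff_le)

lemma riccS_terminal: "riccS A B Q R N (Suc N) = Q"
  unfolding riccS_def by simp

lemma stage_cost_identity:
  fixes A :: "real^'n^'n" and B :: "real^'m^'n" and R :: "real^'m^'m"
  assumes R: "transpose R = R" "\<forall>z. z \<noteq> 0 \<longrightarrow> 0 < qf R z"
    and S: "psd_matrix S"
    and L: "L = matrix_inv (transpose B ** S ** B + R) ** transpose B ** S ** A"
    and \<Gamma>: "\<Gamma> = transpose A ** S ** B ** matrix_inv (transpose B ** S ** B + R) ** transpose B ** S ** A"
    and u: "u = - (L *v x\<^sub>e)"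
    and x': "x' = A *v x + B *v u + w"
  shows "qf Q x' + qf R u = (qf Q x' - qf S x') + (qf (ric_step A B Q R S) x - qf Q x)
           + (qf \<Gamma> (x - x\<^sub>e) + 2 * (w \<bullet> (S *v (A *v x + B *v u))) + qf S w)"
proof -
  define P where "P = transpose B ** S ** B + R"
  define G where "G = matrix_inv P"
  have "invertible P"
    using invertible_weighted_gram_plus S R(2) by (auto simp: P_def psd_matrix_def)
  then have PG: "P ** G = mat 1" unfolding G_def by (rule matrix_inv_right)
  have S_sym: "transpose S = S" using S by (simp add: psd_matrix_def)
  note square = qf_completion_of_squares[OF S_sym R(1) PG[unfolded P_def]]
  have L': "L = G ** transpose B ** S ** A" and \<Gamma>': "\<Gamma> = transpose A ** S ** B ** G ** transpose B ** S ** A"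
    using L \<Gamma> by (simp_all add: P_def G_def)
  have "u + L *v x = L *v (x - x\<^sub>e)" by (simp add: u matrix_vector_mult_diff_distrib)
  then have cost: "qf S (A *v x + B *v u) + qf R u = qf (transpose A ** S ** A) x - qf \<Gamma> x + qf P (L *v (x - x\<^sub>e))"
    using square[of A x u] by (simp add: L' \<Gamma>' P_def)
  have estimation_error: "qf P (L *v (x - x\<^sub>e)) = qf \<Gamma> (x - x\<^sub>e)"
    using square[of A "x - x\<^sub>e" 0]
    unfolding L'[symmetric] \<Gamma>'[symmetric] P_def[symmetric] qf_transpose_mult by (simp add: qf_def)
  have ric: "qf (ric_step A B Q R S) x = qf Q x + qf (transpose A ** S ** A) x - qf \<Gamma> x"
    unfolding ric_step_def \<Gamma>' G_def P_def qf_add_matrix qf_diff_matrix by simp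
  have noise: "qf S x' = qf S (A *v x + B *v u) + 2 * (w \<bullet> (S *v (A *v x + B *v u))) + qf S w"
    unfolding x' qf_def using inner_symmetric_matrix[OF S_sym, of w "A *v x + B *v u"]
    by (simp add: matrix_vector_right_distrib inner_add_left inner_add_right)
  show ?thesis using cost estimation_error ric noise by linarith
qed

section \<open>The closed loop\<close>

definition transmitted_estimate :: "real^'n^'n \<Rightarrow> real^'m^'n \<Rightarrow> nat \<Rightarrow> nat
    \<Rightarrow> (nat \<Rightarrow> real^'n) \<Rightarrow> (nat \<Rightarrow> real^'m) \<Rightarrow> real^'n" where
  "transmitted_estimate A B k z x u = mpow A (z + 1) *v x (k - z) + (\<Sum>t\<le>z. mpow A t *v (B *v u (k - t)))"

lemma sys_step_simps:
  "hx (sys_step A B L w tau v p h k) i = (if i = Suc k then A *v hx h k + B *v (- (L k *v hxh h k)) + w k else hx h i)"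
  "hu (sys_step A B L w tau v p h k) i = (if i = k then - (L k *v hxh h k) else hu h i)"
  "hxh (sys_step A B L w tau v p h k) i = (if i = Suc k then
      (if v k < p k (info_of tau h k)
       then transmitted_estimate A B k (zeta tau k) (hx h) ((hu h)(k := - (L k *v hxh h k)))
       else A *v hxh h k + B *v (- (L k *v hxh h k))) else hxh h i)"
  "hd (sys_step A B L w tau v p h k) i = (if i = k then v k < p k (info_of tau h k) else hd h i)"
  "heta (sys_step A B L w tau v p h k) i = (if i = Suc k then
      (if v k < p k (info_of tau h k) then enat (zeta tau k + 1) else heta h k + 1) else heta h i)"
  by (simp_all add: sys_step_def Let_def transmitted_estimate_def)

lemma run_prefix_stable:
  assumes "m \<le> n"
  shows "i \<le> m \<Longrightarrow> hx (run A B L m0 x0 w tau v p n) i = hx (run A B L m0 x0 w tau v p m) i"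
    and "i \<le> m \<Longrightarrow> hxh (run A B L m0 x0 w tau v p n) i = hxh (run A B L m0 x0 w tau v p m) i"
    and "i < m \<Longrightarrow> hu (run A B L m0 x0 w tau v p n) i = hu (run A B L m0 x0 w tau v p m) i"
  using assms by (induction n) (auto simp: sys_step_simps le_Suc_eq)

lemma run_dynamics:
  assumes "k \<le> N" and h: "h = run A B L m0 x0 w tau v p (Suc N)"
  shows "hx h 0 = x0"
    and "hu h k = - (L k *v hxh h k)"
    and "hx h (Suc k) = A *v hx h k + B *v hu h k + w k"
proof -
  let ?r = "run A B L m0 x0 w tau v p"
  have "hx h 0 = hx (?r 0) 0" "hx h k = hx (?r k) k" "hxh h k = hxh (?r k) k"
    "hx h (Suc k) = hx (?r (Suc k)) (Suc k)" "hu h k = hu (?r (Suc k)) k"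
    unfolding h by (intro run_prefix_stable; use assms in simp)+
  then show "hx h 0 = x0" "hu h k = - (L k *v hxh h k)" "hx h (Suc k) = A *v hx h k + B *v hu h k + w k"
    by (simp_all add: sys_step_simps hist_init_def)
qed

lemma closed_loop_cost_identity:
  fixes A :: "real^'n^'n" and B :: "real^'m^'n" and R :: "real^'m^'m"
  assumes Q: "psd_matrix Q" and R: "transpose R = R" "\<forall>z. z \<noteq> 0 \<longrightarrow> 0 < qf R z"
    and h: "h = run A B (gainL A B Q R N) m0 x0 w tau v p (Suc N)"
  shows "(\<Sum>k\<le>N. qf Q (hx h (Suc k)) + qf R (hu h k)) =
     qf (riccS A B Q R N 0) x0 - qf Q x0 +
     (\<Sum>k\<le>N. qf (Gam A B Q R N k) (hx h k - hxh h k)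
        + 2 * (w k \<bullet> (riccS A B Q R N (Suc k) *v (A *v hx h k + B *v hu h k)))
        + qf (riccS A B Q R N (Suc k)) (w k))"
proof -
  let ?S = "riccS A B Q R N"
  define f where "f k = qf (?S k) (hx h k) - qf Q (hx h k)" for k
  define r where "r k = qf (Gam A B Q R N k) (hx h k - hxh h k)
    + 2 * (w k \<bullet> (?S (Suc k) *v (A *v hx h k + B *v hu h k))) + qf (?S (Suc k)) (w k)" for k
  have "qf Q (hx h (Suc k)) + qf R (hu h k) = (f k - f (Suc k)) + r k" if k: "k \<le> N" for k
  proof -
    have "qf Q (hx h (Suc k)) + qf R (hu h k) = (qf Q (hx h (Suc k)) - qf (?S (Suc k)) (hx h (Suc k)))
       + (qf (ric_step A B Q R (?S (Suc k))) (hx h k) - qf Q (hx h k)) + r k"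
      unfolding r_def
      by (rule stage_cost_identity[OF R riccS_psd[OF Q R]])
        (use run_dynamics[OF k h] in \<open>simp_all add: gainL_def Gam_def Let_def\<close>)
    then show ?thesis by (simp add: f_def riccS_Suc[OF k])
  qed
  then have "(\<Sum>k\<le>N. qf Q (hx h (Suc k)) + qf R (hu h k)) = (\<Sum>k\<le>N. f k - f (Suc k)) + (\<Sum>k\<le>N. r k)"
    by (simp add: sum.distrib)
  also have "(\<Sum>k\<le>N. f k - f (Suc k)) = f 0 - f (Suc N)" by (rule sum_telescope)
  also have "f (Suc N) = 0" by (simp add: f_def riccS_terminal)
  also have "f 0 = qf (?S 0) x0 - qf Q x0" by (simp add: f_def run_dynamics(1)[OF le0 h])
  finally show ?thesis by (simp add: r_def)
qed

definition random_run :: "real^'n^'n \<Rightarrow> real^'m^'n \<Rightarrow> (nat \<Rightarrow> real^'n^'m) \<Rightarrow> real^'n \<Rightarrow> ('w \<Rightarrow> real^'n)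
   \<Rightarrow> (nat \<Rightarrow> 'w \<Rightarrow> real^'n) \<Rightarrow> (nat \<Rightarrow> 'w \<Rightarrow> nat) \<Rightarrow> (nat \<Rightarrow> 'w \<Rightarrow> real)
   \<Rightarrow> (nat \<Rightarrow> (nat \<Rightarrow> ('n::finite, 'm::finite) infoval) \<Rightarrow> real) \<Rightarrow> nat \<Rightarrow> 'w \<Rightarrow> ('n, 'm) hist" where
  "random_run A B L m0 X0 Wn Tau V p n \<omega> =
     run A B L m0 (X0 \<omega>) (\<lambda>k. Wn k \<omega>) (\<lambda>k. Tau k \<omega>) (\<lambda>k. V k \<omega>) p n"

lemma random_run_0: "random_run A B L m0 X0 Wn Tau V p 0 \<omega> = hist_init m0 (X0 \<omega>)"
  by (simp add: random_run_def)

lemma random_run_Suc: "random_run A B L m0 X0 Wn Tau V p (Suc n) \<omega> =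
    sys_step A B L (\<lambda>k. Wn k \<omega>) (\<lambda>k. Tau k \<omega>) (\<lambda>k. V k \<omega>) p (random_run A B L m0 X0 Wn Tau V p n \<omega>) n"
  by (simp add: random_run_def)

section \<open>Measurability of the closed loop\<close>

lemma zeta_le: "zeta tau k \<le> k"
  by (induction k) auto

lemma measurable_compose_countable2:
  fixes f :: "'a \<Rightarrow> 'b::countable" and g :: "'a \<Rightarrow> 'c::countable"
  assumes f: "f \<in> measurable G (count_space UNIV)" and g: "g \<in> measurable G (count_space UNIV)"
  shows "(\<lambda>\<omega>. F (f \<omega>) (g \<omega>)) \<in> measurable G (count_space UNIV)"
proof -
  have "(\<lambda>\<omega>. F a (g \<omega>)) \<in> measurable G (count_space UNIV)" for a
    by (rule measurable_compose_countable[where g=g and f="\<lambda>b \<omega>. F a b", OF _ g]) simp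
  then show ?thesis
    by (rule measurable_compose_countable[where g=f and f="\<lambda>a \<omega>. F a (g \<omega>)", OF _ f])
qed

lemma zeta_measurable:
  assumes "\<And>j. Tau j \<in> measurable G (count_space UNIV)"
  shows "(\<lambda>\<omega>. zeta (\<lambda>k. Tau k \<omega>) i) \<in> measurable G (count_space UNIV)"
proof (induction i)
  case (Suc i)
  show ?case
    using measurable_compose_countable2[OF assms Suc.IH, where F="\<lambda>a b. if a < b + 1 then a else b + 1"]
    by simp
qed simp

lemma borel_measurable_matrix_vector_mult[measurable (raw)]:
  fixes P :: "real^'n^'m"
  shows "f \<in> borel_measurable G \<Longrightarrow> (\<lambda>\<omega>. P *v f \<omega>) \<in> borel_measurable G"
  by (rule borel_measurable_continuous_on[OF linear_continuous_on[OF matrix_vector_mul_bounded_linear]])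

lemma borel_measurable_vec_nth[measurable (raw)]:
  "f \<in> borel_measurable G \<Longrightarrow> (\<lambda>\<omega>. (f \<omega> :: real^'n) $ i) \<in> borel_measurable G"
  unfolding cart_eq_inner_axis by (rule borel_measurable_inner) simp_all

lemma borel_measurable_qf[measurable (raw)]:
  "f \<in> borel_measurable G \<Longrightarrow> (\<lambda>\<omega>. qf P (f \<omega>)) \<in> borel_measurable G"
  unfolding qf_def by (rule borel_measurable_inner, assumption, rule borel_measurable_matrix_vector_mult)

lemma borel_measurable_of_bool[measurable (raw)]:
  "(b :: 'a \<Rightarrow> bool) \<in> measurable G (count_space UNIV) \<Longrightarrow> (\<lambda>\<omega>. of_bool (b \<omega>) :: real) \<in> borel_measurable G"
  by (rule measurable_compose[of b G "count_space UNIV"]) simp_all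

definition hist_measurable :: "'w measure \<Rightarrow> ('w \<Rightarrow> ('n::finite, 'm::finite) hist) \<Rightarrow> bool" where
  "hist_measurable G h \<longleftrightarrow> (\<forall>i.
       (\<lambda>\<omega>. hx (h \<omega>) i) \<in> borel_measurable G \<and> (\<lambda>\<omega>. hxh (h \<omega>) i) \<in> borel_measurable G
     \<and> (\<lambda>\<omega>. hu (h \<omega>) i) \<in> borel_measurable G \<and> (\<lambda>\<omega>. hd (h \<omega>) i) \<in> measurable G (count_space UNIV)
     \<and> (\<lambda>\<omega>. heta (h \<omega>) i) \<in> measurable G (count_space UNIV))"

lemma hist_measurableD:
  assumes "hist_measurable G h"
  shows "(\<lambda>\<omega>. hx (h \<omega>) i) \<in> borel_measurable G" "(\<lambda>\<omega>. hxh (h \<omega>) i) \<in> borel_measurable G"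
    "(\<lambda>\<omega>. hu (h \<omega>) i) \<in> borel_measurable G" "(\<lambda>\<omega>. hd (h \<omega>) i) \<in> measurable G (count_space UNIV)"
    "(\<lambda>\<omega>. heta (h \<omega>) i) \<in> measurable G (count_space UNIV)"
  using assms by (simp_all add: hist_measurable_def)

lemma info_of_measurable:
  fixes h :: "'w \<Rightarrow> ('n::finite, 'm::finite) hist"
  assumes T: "\<And>j. Tau j \<in> measurable G (count_space UNIV)" and h: "hist_measurable G h"
  shows "(\<lambda>\<omega>. info_of (\<lambda>k. Tau k \<omega>) (h \<omega>) k) \<in> measurable G info_space"
proof -
  note z = zeta_measurable[OF T]
  note hx = hist_measurableD(1)[OF h] and hu = hist_measurableD(3)[OF h]
    and hd = hist_measurableD(4)[OF h] and he = hist_measurableD(5)[OF h]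
  have a: "(\<lambda>\<omega>. hx (h \<omega>) (i - zeta (\<lambda>k. Tau k \<omega>) i)) \<in> borel_measurable G" for i
    by (rule measurable_compose_countable[where f="\<lambda>a \<omega>. hx (h \<omega>) (i - a)", OF hx z])
  have b: "(\<lambda>\<omega>. if heta (h \<omega>) i = \<infinity> then 0 else hx (h \<omega>) (i - the_enat (heta (h \<omega>) i))) \<in> borel_measurable G" for i
  proof (rule measurable_compose_countable[where f="\<lambda>e \<omega>. if e = \<infinity> then 0 else hx (h \<omega>) (i - the_enat e)", OF _ he])
    fix e :: enat show "(\<lambda>\<omega>. if e = \<infinity> then 0 else hx (h \<omega>) (i - the_enat e)) \<in> borel_measurable G"
      by (cases "e = \<infinity>") (simp, simp only: if_False hx)
  qed
  show ?thesis
    unfolding info_space_def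
  proof (rule measurable_PiM_single')
    show "(\<lambda>\<omega>. info_of (\<lambda>k. Tau k \<omega>) (h \<omega>) k i) \<in> measurable G
      (((count_space UNIV \<Otimes>\<^sub>M borel) \<Otimes>\<^sub>M (count_space UNIV \<Otimes>\<^sub>M borel))
        \<Otimes>\<^sub>M (count_space UNIV \<Otimes>\<^sub>M borel))" for i
      unfolding info_of_def
      by (cases "i \<le> k"; cases "i < k"; simp only: if_True if_False;
          intro measurable_Pair z a b hx hu hd he measurable_const; simp)
  qed (simp add: space_pair_measure)
qed

lemma transmitted_estimate_measurable:
  assumes z: "z \<in> measurable G (count_space UNIV)"
    and x: "\<And>i. (\<lambda>\<omega>. x \<omega> i) \<in> borel_measurable G" and u: "\<And>i. (\<lambda>\<omega>. u \<omega> i) \<in> borel_measurable G"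
  shows "(\<lambda>\<omega>. transmitted_estimate A B k (z \<omega>) (x \<omega>) (u \<omega>)) \<in> borel_measurable G"
proof (rule measurable_compose_countable[where f="\<lambda>a \<omega>. transmitted_estimate A B k a (x \<omega>) (u \<omega>)", OF _ z])
  note [measurable] = x u
  show "(\<lambda>\<omega>. transmitted_estimate A B k a (x \<omega>) (u \<omega>)) \<in> borel_measurable G" for a
    unfolding transmitted_estimate_def by measurable
qed

lemma transmission_decision_measurable:
  fixes V :: "'w \<Rightarrow> real"
  assumes T: "\<And>j. Tau j \<in> measurable G (count_space UNIV)" and h: "hist_measurable G h"
    and V: "V \<in> borel_measurable G" and p: "p \<in> borel_measurable info_space"
  shows "(\<lambda>\<omega>. V \<omega> < p (info_of (\<lambda>k. Tau k \<omega>) (h \<omega>) n)) \<in> measurable G (count_space UNIV)"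
proof -
  have "(\<lambda>\<omega>. p (info_of (\<lambda>k. Tau k \<omega>) (h \<omega>) n)) \<in> borel_measurable G"
    by (rule measurable_compose[OF info_of_measurable[OF T h] p])
  then have "{\<omega> \<in> space G. V \<omega> < p (info_of (\<lambda>k. Tau k \<omega>) (h \<omega>) n)} \<in> sets G"
    by (rule borel_measurable_less[OF V])
  then show ?thesis by (simp add: Measurable.pred_def)
qed

lemma random_run_measurable:
  fixes A :: "real^'n^'n" and B :: "real^'m^'n" and L :: "nat \<Rightarrow> real^'n^'m"
    and X0 :: "'w \<Rightarrow> real^'n" and Wn :: "nat \<Rightarrow> 'w \<Rightarrow> real^'n"
    and Tau :: "nat \<Rightarrow> 'w \<Rightarrow> nat" and V :: "nat \<Rightarrow> 'w \<Rightarrow> real"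
    and p :: "nat \<Rightarrow> (nat \<Rightarrow> ('n, 'm) infoval) \<Rightarrow> real"
  assumes X0: "X0 \<in> borel_measurable G"
    and W: "\<And>j. j < n \<Longrightarrow> Wn j \<in> borel_measurable G"
    and T: "\<And>j. Tau j \<in> measurable G (count_space UNIV)"
    and V: "\<And>j. j < n \<Longrightarrow> V j \<in> borel_measurable G"
    and p: "\<And>j. j < n \<Longrightarrow> p j \<in> borel_measurable info_space"
  shows "hist_measurable G (random_run A B L m0 X0 Wn Tau V p n)"
  using W V p
proof (induction n)
  case 0
  show ?case using X0 by (simp add: hist_measurable_def random_run_0 hist_init_def)
next
  case (Suc n)
  define h where "h = random_run A B L m0 X0 Wn Tau V p n"
  have h: "hist_measurable G h" unfolding h_def using Suc by simp
  note IH[measurable] = hist_measurableD[OF h]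
  have [measurable]: "Wn n \<in> borel_measurable G" "V n \<in> borel_measurable G"
    using Suc.prems by auto
  define u where "u \<omega> = - (L n *v hxh (h \<omega>) n)" for \<omega>
  have [measurable]: "u \<in> borel_measurable G" unfolding u_def by measurable
  define d where "d \<omega> = (V n \<omega> < p n (info_of (\<lambda>k. Tau k \<omega>) (h \<omega>) n))" for \<omega>
  have [measurable]: "d \<in> measurable G (count_space UNIV)"
    unfolding d_def using Suc.prems by (intro transmission_decision_measurable T h) simp_all
  note z = zeta_measurable[OF T, where i=n]
  have "(\<lambda>\<omega>. ((hu (h \<omega>))(n := u \<omega>)) i) \<in> borel_measurable G" for i
    by (cases "i = n") simp_all
  then have "(\<lambda>\<omega>. transmitted_estimate A B n (zeta (\<lambda>k. Tau k \<omega>) n) (hx (h \<omega>)) ((hu (h \<omega>))(n := u \<omega>)))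
      \<in> borel_measurable G"
    by (intro transmitted_estimate_measurable z IH)
  then have "(\<lambda>\<omega>. if d \<omega> then transmitted_estimate A B n (zeta (\<lambda>k. Tau k \<omega>) n) (hx (h \<omega>)) ((hu (h \<omega>))(n := u \<omega>))
      else A *v hxh (h \<omega>) n + B *v u \<omega>) \<in> borel_measurable G"
    by measurable
  moreover have "(\<lambda>\<omega>. enat (zeta (\<lambda>k. Tau k \<omega>) n + 1)) \<in> measurable G (count_space UNIV)"
    "(\<lambda>\<omega>. heta (h \<omega>) n + 1) \<in> measurable G (count_space UNIV)"
    by (rule measurable_compose[OF z], simp) (rule measurable_compose[OF IH(5)], simp)
  then have "(\<lambda>\<omega>. if d \<omega> then enat (zeta (\<lambda>k. Tau k \<omega>) n + 1) else heta (h \<omega>) n + 1)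
      \<in> measurable G (count_space UNIV)"
    by measurable
  ultimately show ?case
    unfolding hist_measurable_def random_run_Suc h_def[symmetric] sys_step_simps
      u_def[symmetric] d_def[symmetric]
    by (auto simp: measurable_If)
qed

section \<open>Linear growth and integrability\<close>

definition linearly_bounded :: "('w \<Rightarrow> real) \<Rightarrow> ('w \<Rightarrow> 'a::real_normed_vector) \<Rightarrow> bool" where
  "linearly_bounded Y f \<longleftrightarrow> (\<exists>C. \<forall>\<omega>. norm (f \<omega>) \<le> C * Y \<omega>)"

lemma linearly_bounded_of_norm_le: "(\<And>\<omega>. norm (f \<omega>) \<le> Y \<omega>) \<Longrightarrow> linearly_bounded Y f"
  unfolding linearly_bounded_def by (intro exI[of _ 1]) simp

lemma bounded_imp_linearly_bounded:
  assumes "\<And>\<omega>. norm (f \<omega>) \<le> c" and "\<And>\<omega>. 1 \<le> Y \<omega>"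
  shows "linearly_bounded Y f"
  unfolding linearly_bounded_def
proof (intro exI allI)
  fix \<omega>
  have "c \<le> \<bar>c\<bar> * 1" by simp
  also have "\<dots> \<le> \<bar>c\<bar> * Y \<omega>" using assms(2) by (intro mult_left_mono) auto
  finally show "norm (f \<omega>) \<le> \<bar>c\<bar> * Y \<omega>" using assms(1) order_trans by blast
qed

lemma linearly_bounded_add:
  assumes "linearly_bounded Y f" "linearly_bounded Y g"
  shows "linearly_bounded Y (\<lambda>\<omega>. f \<omega> + g \<omega>)"
proof -
  obtain C D where C: "\<And>\<omega>. norm (f \<omega>) \<le> C * Y \<omega>" and D: "\<And>\<omega>. norm (g \<omega>) \<le> D * Y \<omega>"
    using assms by (auto simp: linearly_bounded_def)
  have "norm (f \<omega> + g \<omega>) \<le> (C + D) * Y \<omega>" for \<omega>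
    using C[of \<omega>] D[of \<omega>] norm_triangle_ineq[of "f \<omega>" "g \<omega>"] by (simp add: distrib_right)
  then show ?thesis unfolding linearly_bounded_def by blast
qed

lemma linearly_bounded_uminus: "linearly_bounded Y f \<Longrightarrow> linearly_bounded Y (\<lambda>\<omega>. - f \<omega>)"
  unfolding linearly_bounded_def by simp

lemma linearly_bounded_diff:
  "linearly_bounded Y f \<Longrightarrow> linearly_bounded Y g \<Longrightarrow> linearly_bounded Y (\<lambda>\<omega>. f \<omega> - g \<omega>)"
  using linearly_bounded_add[of Y f "\<lambda>\<omega>. - g \<omega>"] linearly_bounded_uminus[of Y g] by simp

lemma linearly_bounded_sum:
  "(\<And>t. t \<in> S \<Longrightarrow> linearly_bounded Y (f t)) \<Longrightarrow> linearly_bounded Y (\<lambda>\<omega>. \<Sum>t\<in>S. f t \<omega>)"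
proof (induction S rule: infinite_finite_induct)
  case (insert x F)
  then show ?case using linearly_bounded_add[of Y "f x" "\<lambda>\<omega>. \<Sum>t\<in>F. f t \<omega>"] by simp
qed (auto simp: linearly_bounded_def intro: exI[of _ 0])

lemma linearly_bounded_matrix_vector_mult:
  assumes "linearly_bounded Y f"
  shows "linearly_bounded Y (\<lambda>\<omega>. (P :: real^'n^'m) *v f \<omega>)"
proof -
  obtain C where C: "\<And>\<omega>. norm (f \<omega>) \<le> C * Y \<omega>" using assms by (auto simp: linearly_bounded_def)
  obtain K where K: "K > 0" "\<And>x. norm (P *v x) \<le> norm x * K"
    using bounded_linear.pos_bounded[OF matrix_vector_mul_bounded_linear[of P]] by blast
  have "norm (P *v f \<omega>) \<le> (C * K) * Y \<omega>" for \<omega>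
  proof -
    have "norm (P *v f \<omega>) \<le> norm (f \<omega>) * K" by (rule K(2))
    also have "\<dots> \<le> (C * Y \<omega>) * K" using C K(1) by (simp add: mult_right_mono)
    finally show ?thesis by (simp add: algebra_simps)
  qed
  then show ?thesis unfolding linearly_bounded_def by blast
qed

lemma linearly_bounded_vec_nth: "linearly_bounded Y f \<Longrightarrow> linearly_bounded Y (\<lambda>\<omega>. (f \<omega> :: real^'n) $ i)"
  unfolding linearly_bounded_def using component_le_norm_cart by (metis order_trans real_norm_def)

lemma linearly_bounded_if:
  assumes "linearly_bounded Y f" "linearly_bounded Y g" and Y: "\<And>\<omega>. 0 \<le> Y \<omega>"
  shows "linearly_bounded Y (\<lambda>\<omega>. if c \<omega> then f \<omega> else g \<omega>)"
proof -
  obtain C D where C: "\<And>\<omega>. norm (f \<omega>) \<le> C * Y \<omega>" and D: "\<And>\<omega>. norm (g \<omega>) \<le> D * Y \<omega>"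
    using assms by (auto simp: linearly_bounded_def)
  have "C * Y \<omega> \<le> max C D * Y \<omega>" "D * Y \<omega> \<le> max C D * Y \<omega>" for \<omega>
    using Y[of \<omega>] by (simp_all add: mult_right_mono)
  then have "norm (if c \<omega> then f \<omega> else g \<omega>) \<le> max C D * Y \<omega>" for \<omega>
    using C[of \<omega>] D[of \<omega>] by (cases "c \<omega>") (auto intro: order_trans)
  then show ?thesis unfolding linearly_bounded_def by blast
qed

lemma linearly_bounded_select:
  fixes k :: nat
  assumes F: "\<And>a. a \<le> k \<Longrightarrow> linearly_bounded Y (F a)" and z: "\<And>\<omega>. z \<omega> \<le> k"
    and Y: "\<And>\<omega>. 0 \<le> Y \<omega>"
  shows "linearly_bounded Y (\<lambda>\<omega>. F (z \<omega>) \<omega>)"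
proof -
  have "\<forall>a\<in>{..k}. \<exists>C. \<forall>\<omega>. norm (F a \<omega>) \<le> C * Y \<omega>" using F unfolding linearly_bounded_def by auto
  then obtain C where C: "\<And>a \<omega>. a \<le> k \<Longrightarrow> norm (F a \<omega>) \<le> C a * Y \<omega>"
    by (metis atMost_iff)
  have "norm (F (z \<omega>) \<omega>) \<le> (\<Sum>a\<le>k. \<bar>C a\<bar>) * Y \<omega>" for \<omega>
  proof -
    have "C (z \<omega>) \<le> (\<Sum>a\<le>k. \<bar>C a\<bar>)"
      using member_le_sum[of "z \<omega>" "{..k}" "\<lambda>a. \<bar>C a\<bar>"] z[of \<omega>] by auto
    then have "C (z \<omega>) * Y \<omega> \<le> (\<Sum>a\<le>k. \<bar>C a\<bar>) * Y \<omega>" using Y[of \<omega>] by (rule mult_right_mono)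
    then show ?thesis using C[OF z[of \<omega>], of \<omega>] by linarith
  qed
  then show ?thesis unfolding linearly_bounded_def by blast
qed

lemma linearly_bounded_mono:
  assumes "linearly_bounded Y f" and "\<And>\<omega>. 0 \<le> Y \<omega>" "\<And>\<omega>. Y \<omega> \<le> Y' \<omega>"
  shows "linearly_bounded Y' f"
proof -
  obtain C where C: "\<And>\<omega>. norm (f \<omega>) \<le> C * Y \<omega>" using assms(1) by (auto simp: linearly_bounded_def)
  have "norm (f \<omega>) \<le> max C 0 * Y' \<omega>" for \<omega>
  proof -
    have "C * Y \<omega> \<le> max C 0 * Y \<omega>" using assms(2) by (intro mult_right_mono) auto
    also have "\<dots> \<le> max C 0 * Y' \<omega>" using assms(3) by (intro mult_left_mono) auto
    finally show ?thesis using C[of \<omega>] by linarith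
  qed
  then show ?thesis unfolding linearly_bounded_def by blast
qed

lemma linearly_bounded_inner:
  fixes f g :: "'w \<Rightarrow> 'a::real_inner"
  assumes "linearly_bounded Y f" "linearly_bounded Y g"
  shows "linearly_bounded (\<lambda>\<omega>. (Y \<omega>)\<^sup>2) (\<lambda>\<omega>. f \<omega> \<bullet> g \<omega>)"
proof -
  obtain C D where C: "\<And>\<omega>. norm (f \<omega>) \<le> C * Y \<omega>" and D: "\<And>\<omega>. norm (g \<omega>) \<le> D * Y \<omega>"
    using assms by (auto simp: linearly_bounded_def)
  have "norm (f \<omega> \<bullet> g \<omega>) \<le> (C * D) * (Y \<omega>)\<^sup>2" for \<omega>
  proof -
    have "norm (f \<omega> \<bullet> g \<omega>) \<le> norm (f \<omega>) * norm (g \<omega>)" by (simp add: Cauchy_Schwarz_ineq2)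
    also have "\<dots> \<le> (C * Y \<omega>) * (D * Y \<omega>)"
      using C[of \<omega>] D[of \<omega>] by (intro mult_mono) (auto intro: order_trans[OF norm_ge_zero])
    finally show ?thesis by (simp add: power2_eq_square algebra_simps)
  qed
  then show ?thesis unfolding linearly_bounded_def by blast
qed

lemma linearly_bounded_qf:
  "linearly_bounded Y f \<Longrightarrow> linearly_bounded (\<lambda>\<omega>. (Y \<omega>)\<^sup>2) (\<lambda>\<omega>. qf P (f \<omega>))"
  unfolding qf_def by (intro linearly_bounded_inner linearly_bounded_matrix_vector_mult)

lemma integrable_if_linearly_bounded:
  fixes g :: "'w \<Rightarrow> real"
  assumes "integrable M Y" "g \<in> borel_measurable M" "linearly_bounded Y g"
  shows "integrable M g"
proof -
  obtain C where C: "\<And>\<omega>. \<bar>g \<omega>\<bar> \<le> C * Y \<omega>" using assms(3) by (auto simp: linearly_bounded_def)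
  show ?thesis
  proof (rule Bochner_Integration.integrable_bound[OF integrable_mult_right[OF assms(1), of C] assms(2)])
    show "AE \<omega> in M. norm (g \<omega>) \<le> norm (C * Y \<omega>)"
      using C by (intro AE_I2) (auto intro: order_trans[OF _ abs_ge_self])
  qed
qed

definition hist_linearly_bounded :: "('w \<Rightarrow> real) \<Rightarrow> ('w \<Rightarrow> ('n::finite, 'm::finite) hist) \<Rightarrow> bool" where
  "hist_linearly_bounded Y h \<longleftrightarrow> (\<forall>i. linearly_bounded Y (\<lambda>\<omega>. hx (h \<omega>) i)
     \<and> linearly_bounded Y (\<lambda>\<omega>. hxh (h \<omega>) i) \<and> linearly_bounded Y (\<lambda>\<omega>. hu (h \<omega>) i))"

lemma hist_linearly_boundedD:
  assumes "hist_linearly_bounded Y h"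
  shows "linearly_bounded Y (\<lambda>\<omega>. hx (h \<omega>) i)" "linearly_bounded Y (\<lambda>\<omega>. hxh (h \<omega>) i)"
    "linearly_bounded Y (\<lambda>\<omega>. hu (h \<omega>) i)"
  using assms by (simp_all add: hist_linearly_bounded_def)

lemma transmitted_estimate_linearly_bounded:
  assumes z: "\<And>\<omega>. z \<omega> \<le> k" and x: "\<And>i. linearly_bounded Y (\<lambda>\<omega>. x \<omega> i)"
    and u: "\<And>i. linearly_bounded Y (\<lambda>\<omega>. u \<omega> i)" and Y: "\<And>\<omega>. 0 \<le> Y \<omega>"
  shows "linearly_bounded Y (\<lambda>\<omega>. transmitted_estimate A B k (z \<omega>) (x \<omega>) (u \<omega>))"
  by (rule linearly_bounded_select[OF _ z Y], unfold transmitted_estimate_def)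
    (intro linearly_bounded_add linearly_bounded_matrix_vector_mult linearly_bounded_sum x u)

lemma random_run_linearly_bounded:
  fixes A :: "real^'n^'n" and B :: "real^'m^'n" and L :: "nat \<Rightarrow> real^'n^'m"
    and X0 :: "'w \<Rightarrow> real^'n" and Wn :: "nat \<Rightarrow> 'w \<Rightarrow> real^'n"
    and p :: "nat \<Rightarrow> (nat \<Rightarrow> ('n, 'm) infoval) \<Rightarrow> real"
  assumes Y: "\<And>\<omega>. 1 \<le> Y \<omega>" and X0: "\<And>\<omega>. norm (X0 \<omega>) \<le> Y \<omega>"
    and W: "\<And>j \<omega>. j < n \<Longrightarrow> norm (Wn j \<omega>) \<le> Y \<omega>"
  shows "hist_linearly_bounded Y (random_run A B L m0 X0 Wn Tau V p n)"
  using W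
proof (induction n)
  case 0
  have "linearly_bounded Y (\<lambda>_. m0)" "linearly_bounded Y (\<lambda>_. 0 :: real^'n)"
    "linearly_bounded Y (\<lambda>_. 0 :: real^'m)"
    by (rule bounded_imp_linearly_bounded[OF order_refl Y])+
  moreover have "linearly_bounded Y X0" by (rule linearly_bounded_of_norm_le[OF X0])
  ultimately show ?case using Y
    by (simp add: hist_linearly_bounded_def random_run_0 hist_init_def linearly_bounded_if)
next
  case (Suc n)
  define h where "h = random_run A B L m0 X0 Wn Tau V p n"
  have "hist_linearly_bounded Y h" unfolding h_def using Suc by simp
  note IH = hist_linearly_boundedD[OF this]
  have Y0: "\<And>\<omega>. 0 \<le> Y \<omega>" using Y order_trans zero_le_one by blast
  have Wn: "linearly_bounded Y (Wn n)" using Suc.prems by (intro linearly_bounded_of_norm_le) auto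
  define u where "u \<omega> = - (L n *v hxh (h \<omega>) n)" for \<omega>
  have u: "linearly_bounded Y u"
    unfolding u_def by (intro linearly_bounded_uminus linearly_bounded_matrix_vector_mult IH)
  have "linearly_bounded Y (\<lambda>\<omega>. ((hu (h \<omega>))(n := u \<omega>)) i)" for i
    by (cases "i = n") (simp_all add: u IH)
  then have "linearly_bounded Y (\<lambda>\<omega>. transmitted_estimate A B n (zeta (\<lambda>k. Tau k \<omega>) n) (hx (h \<omega>))
      ((hu (h \<omega>))(n := u \<omega>)))"
    by (intro transmitted_estimate_linearly_bounded zeta_le IH Y0)
  then have "linearly_bounded Y
      (\<lambda>\<omega>. if V n \<omega> < p n (info_of (\<lambda>k. Tau k \<omega>) (h \<omega>) n)
            then transmitted_estimate A B n (zeta (\<lambda>k. Tau k \<omega>) n) (hx (h \<omega>)) ((hu (h \<omega>))(n := u \<omega>))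
            else A *v hxh (h \<omega>) n + B *v u \<omega>)"
    by (intro linearly_bounded_if linearly_bounded_add linearly_bounded_matrix_vector_mult IH u Y0)
  moreover have "linearly_bounded Y (\<lambda>\<omega>. A *v hx (h \<omega>) n + B *v u \<omega> + Wn n \<omega>)"
    by (intro linearly_bounded_add linearly_bounded_matrix_vector_mult IH u Wn)
  ultimately show ?case
    unfolding hist_linearly_bounded_def random_run_Suc h_def[symmetric] sys_step_simps
      u_def[symmetric]
    by (auto intro: linearly_bounded_if IH u Y0)
qed

section \<open>Gaussian sources and independence\<close>

lemma integrable_normal_density_square:
  assumes "0 < \<sigma>"
  shows "integrable lborel (\<lambda>x. normal_density \<mu> \<sigma> x * x\<^sup>2)"
proof -
  have "integrable lborel (\<lambda>x. normal_density \<mu> \<sigma> x * (x - \<mu>)^2 + (2*\<mu>) * (normal_density \<mu> \<sigma> x * (x - \<mu>)^1)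
      + \<mu>\<^sup>2 * (normal_density \<mu> \<sigma> x * (x - \<mu>)^0))"
    using integrable_normal_moment[OF assms] by (intro Bochner_Integration.integrable_add integrable_mult_right)
  moreover have "(\<lambda>x. normal_density \<mu> \<sigma> x * (x - \<mu>)^2 + (2*\<mu>) * (normal_density \<mu> \<sigma> x * (x - \<mu>)^1)
      + \<mu>\<^sup>2 * (normal_density \<mu> \<sigma> x * (x - \<mu>)^0)) = (\<lambda>x. normal_density \<mu> \<sigma> x * x\<^sup>2)"
    by (rule ext) (simp add: power2_eq_square algebra_simps)
  ultimately show ?thesis by simp
qed

lemma gaussian_vec_component_cases:
  fixes X :: "'w \<Rightarrow> real^'n"
  assumes G: "gaussian_vec M X \<mu> C" and C: "\<forall>z. 0 \<le> qf C z"
  obtains "AE \<omega> in M. X \<omega> $ i = \<mu> $ i"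
  | \<sigma> where "0 < \<sigma>" "distributed M lborel (\<lambda>\<omega>. X \<omega> $ i) (\<lambda>x. ennreal (normal_density (\<mu> $ i) \<sigma> x))"
proof -
  define c :: "real^'n" where "c = axis i 1"
  have ci: "c \<bullet> x = x $ i" for x unfolding c_def by (simp add: inner_axis')
  have "(0 < qf C c \<longrightarrow> distributed M lborel (\<lambda>\<omega>. c \<bullet> X \<omega>)
                             (\<lambda>x. ennreal (normal_density (c \<bullet> \<mu>) (sqrt (qf C c)) x)))
      \<and> (qf C c = 0 \<longrightarrow> (AE \<omega> in M. c \<bullet> X \<omega> = c \<bullet> \<mu>))"
    using G unfolding gaussian_vec_def by (rule conjunct2[THEN spec])
  then have normal: "0 < qf C c \<Longrightarrow> distributed M lborel (\<lambda>\<omega>. X \<omega> $ i)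
                             (\<lambda>x. ennreal (normal_density (\<mu> $ i) (sqrt (qf C c)) x))"
    and degenerate: "qf C c = 0 \<Longrightarrow> AE \<omega> in M. X \<omega> $ i = \<mu> $ i"
    by (simp_all add: ci)
  show thesis
  proof (cases "qf C c = 0")
    case True
    then show thesis using degenerate that(1) by blast
  next
    case False
    then have "0 < qf C c" using C by (simp add: order_less_le)
    then show thesis using normal that(2) real_sqrt_gt_zero by blast
  qed
qed

lemma (in prob_space) gaussian_vec_component_square_integrable:
  fixes X :: "'a \<Rightarrow> real^'n"
  assumes "gaussian_vec M X \<mu> C" "\<forall>z. 0 \<le> qf C z"
  shows "integrable M (\<lambda>\<omega>. (X \<omega> $ i)\<^sup>2)"
proof -
  have [measurable]: "X \<in> borel_measurable M" using assms(1) by (simp add: gaussian_vec_def)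
  from assms show ?thesis
  proof (cases rule: gaussian_vec_component_cases[where i=i])
    case 1
    then have "integrable M (\<lambda>\<omega>. (X \<omega> $ i)\<^sup>2) \<longleftrightarrow> integrable M (\<lambda>\<omega>. (\<mu> $ i)\<^sup>2)"
      by (intro integrable_cong_AE) auto
    then show ?thesis by simp
  next
    case (2 \<sigma>)
    then show ?thesis
      using distributed_integrable[OF 2(2), of "\<lambda>x. x\<^sup>2"] integrable_normal_density_square by simp
  qed
qed

lemma (in prob_space) gaussian_vec_component_expectation:
  fixes X :: "'a \<Rightarrow> real^'n"
  assumes "gaussian_vec M X \<mu> C" "\<forall>z. 0 \<le> qf C z"
  shows "integrable M (\<lambda>\<omega>. X \<omega> $ i)" and "(\<integral>\<omega>. X \<omega> $ i \<partial>M) = \<mu> $ i"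
proof -
  have [measurable]: "X \<in> borel_measurable M" using assms(1) by (simp add: gaussian_vec_def)
  from assms have "integrable M (\<lambda>\<omega>. X \<omega> $ i) \<and> (\<integral>\<omega>. X \<omega> $ i \<partial>M) = \<mu> $ i"
  proof (cases rule: gaussian_vec_component_cases[where i=i])
    case 1
    then have "integrable M (\<lambda>\<omega>. X \<omega> $ i) \<longleftrightarrow> integrable M (\<lambda>\<omega>. \<mu> $ i)"
      and "(\<integral>\<omega>. X \<omega> $ i \<partial>M) = (\<integral>\<omega>. \<mu> $ i \<partial>M)"
      by (intro integrable_cong_AE integral_cong_AE; simp)+
    then show ?thesis by (simp add: prob_space)
  next
    case (2 \<sigma>)
    then show ?thesis
      using distributed_integrable[OF 2(2), of "\<lambda>x. x"] integrable_normal_moment_nz_1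
        normal_distributed_expectation[OF 2] by simp
  qed
  then show "integrable M (\<lambda>\<omega>. X \<omega> $ i)" "(\<integral>\<omega>. X \<omega> $ i \<partial>M) = \<mu> $ i" by blast+
qed

lemma rv_events_Int_stable: "Int_stable (rv_events M N X)"
  unfolding Int_stable_def rv_events_def
proof (intro ballI)
  fix a b assume "a \<in> {X -` A \<inter> space M |A. A \<in> sets N}" "b \<in> {X -` A \<inter> space M |A. A \<in> sets N}"
  then obtain A B where "a = X -` A \<inter> space M" "A \<in> sets N" "b = X -` B \<inter> space M" "B \<in> sets N" by blast
  then show "a \<inter> b \<in> {X -` A \<inter> space M |A. A \<in> sets N}"
    by (intro CollectI exI[of _ "A \<inter> B"]) auto
qed

lemma src_events_Int_stable: "Int_stable (src_events M X0 Wn Tau V j)"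
  unfolding src_events_def by (cases j) (simp_all add: rv_events_Int_stable)

lemma src_events_subset: "src_events M X0 Wn Tau V j \<subseteq> Pow (space M)"
  unfolding src_events_def rv_events_def by (cases j) auto

definition sigma_except_noise :: "'w measure \<Rightarrow> ('w \<Rightarrow> real^'n) \<Rightarrow> (nat \<Rightarrow> 'w \<Rightarrow> real^'n)
    \<Rightarrow> (nat \<Rightarrow> 'w \<Rightarrow> nat) \<Rightarrow> (nat \<Rightarrow> 'w \<Rightarrow> real) \<Rightarrow> nat \<Rightarrow> 'w measure" where
  "sigma_except_noise M X0 Wn Tau V k = sigma (space M) (\<Union>j\<in>- {SW k}. src_events M X0 Wn Tau V j)"

lemma space_sigma_except_noise: "space (sigma_except_noise M X0 Wn Tau V k) = space M"
  unfolding sigma_except_noise_def by (rule space_measure_of) (use src_events_subset in blast)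

lemma sets_sigma_except_noise:
  "sets (sigma_except_noise M X0 Wn Tau V k) = sigma_sets (space M) (\<Union>j\<in>- {SW k}. src_events M X0 Wn Tau V j)"
  unfolding sigma_except_noise_def by (rule sets_measure_of) (use src_events_subset in blast)

lemma measurable_sigma_except_noise:
  assumes "rv_events M N X \<subseteq> src_events M X0 Wn Tau V j" "j \<noteq> SW k" "X \<in> measurable M N"
  shows "X \<in> measurable (sigma_except_noise M X0 Wn Tau V k) N"
proof (rule measurableI)
  fix x assume "x \<in> space (sigma_except_noise M X0 Wn Tau V k)"
  then show "X x \<in> space N" unfolding space_sigma_except_noise by (rule measurable_space[OF assms(3)])
next
  fix A assume "A \<in> sets N"
  then have "X -` A \<inter> space M \<in> src_events M X0 Wn Tau V j" using assms(1) unfolding rv_events_def by blast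
  then show "X -` A \<inter> space (sigma_except_noise M X0 Wn Tau V k) \<in> sets (sigma_except_noise M X0 Wn Tau V k)"
    unfolding space_sigma_except_noise sets_sigma_except_noise using assms(2) by blast
qed

lemma (in prob_space) indep_set_noise_sigma_except_noise:
  assumes "indep_sets (src_events M X0 Wn Tau V) UNIV"
  shows "indep_set (sigma_sets (space M) (src_events M X0 Wn Tau V (SW k)))
    (sets (sigma_except_noise M X0 Wn Tau V k))"
proof -
  let ?E = "src_events M X0 Wn Tau V"
  define I where "I b = (if b then {SW k} else - {SW k})" for b
  have "indep_sets (\<lambda>b. sigma_sets (space M) (\<Union>j\<in>I b. ?E j)) UNIV"
  proof (rule indep_sets_collect_sigma)
    have "(\<Union>b\<in>UNIV. I b) = UNIV" unfolding I_def by auto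
    then show "indep_sets ?E (\<Union>b\<in>UNIV. I b)" using assms by simp
    show "disjoint_family_on I UNIV" unfolding disjoint_family_on_def I_def by auto
  qed (rule src_events_Int_stable)
  then show ?thesis
    unfolding indep_set_def sets_sigma_except_noise
    by (rule indep_sets_cong[THEN iffD1, rotated 2]) (auto simp: I_def split: bool.split)
qed

lemma (in prob_space) indep_var_noise_sigma_except_noise:
  fixes Wn :: "nat \<Rightarrow> 'a \<Rightarrow> real^'n" and g :: "real^'n \<Rightarrow> real"
  assumes ind: "indep_sets (src_events M X0 Wn Tau V) UNIV"
    and W: "Wn k \<in> borel_measurable M" and g: "g \<in> borel_measurable borel"
    and f: "f \<in> borel_measurable (sigma_except_noise M X0 Wn Tau V k)"
  shows "indep_var borel (\<lambda>\<omega>. g (Wn k \<omega>)) borel f"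
proof -
  let ?E = "src_events M X0 Wn Tau V"
  have noise_events: "sigma_sets (space M) {(\<lambda>\<omega>. g (Wn k \<omega>)) -` A \<inter> space M |A. A \<in> sets borel}
      \<subseteq> sigma_sets (space M) (?E (SW k))"
  proof (rule sigma_sets_mono')
    show "{(\<lambda>\<omega>. g (Wn k \<omega>)) -` A \<inter> space M |A. A \<in> sets borel} \<subseteq> ?E (SW k)"
    proof
      fix a assume "a \<in> {(\<lambda>\<omega>. g (Wn k \<omega>)) -` A \<inter> space M |A. A \<in> sets borel}"
      then obtain A where A: "a = (\<lambda>\<omega>. g (Wn k \<omega>)) -` A \<inter> space M" "A \<in> sets borel" by blast
      have "g -` A \<inter> space borel \<in> sets borel" using g A(2) by (rule measurable_sets)
      moreover have "a = Wn k -` (g -` A \<inter> space borel) \<inter> space M" using A by auto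
      ultimately show "a \<in> ?E (SW k)" unfolding src_events_def rv_events_def by auto
    qed
  qed
  have f_sets: "f -` A \<inter> space M \<in> sets (sigma_except_noise M X0 Wn Tau V k)" if "A \<in> sets borel" for A
    using measurable_sets[OF f that] unfolding space_sigma_except_noise .
  have "sets (sigma_except_noise M X0 Wn Tau V k) \<subseteq> events"
    using ind unfolding indep_sets_def sets_sigma_except_noise by (intro sets.sigma_sets_subset) auto
  then have f_M: "f \<in> borel_measurable M"
    by (intro measurableI) (use f_sets in auto)
  have f_events: "sigma_sets (space M) {f -` A \<inter> space M |A. A \<in> sets borel}
      \<subseteq> sets (sigma_except_noise M X0 Wn Tau V k)"
    unfolding sets_sigma_except_noise
    by (rule sigma_sets_mono) (use f_sets[unfolded sets_sigma_except_noise] in blast)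
  show ?thesis
    unfolding indep_var_eq
  proof (intro conjI)
    show "random_variable borel (\<lambda>\<omega>. g (Wn k \<omega>))" by (rule measurable_compose[OF W g])
    show "random_variable borel f" by (rule f_M)
    show "indep_set (sigma_sets (space M) {(\<lambda>\<omega>. g (Wn k \<omega>)) -` A \<inter> space M |A. A \<in> sets borel})
        (sigma_sets (space M) {f -` A \<inter> space M |A. A \<in> sets borel})"
      using indep_set_noise_sigma_except_noise[OF ind, of k] unfolding indep_set_def
      by (rule indep_sets_mono_sets) (use noise_events f_events in \<open>auto split: bool.split\<close>)
  qed
qed

section \<open>Equivalence of the two loss functions\<close>

lemma minimizer_iff_of_affine:
  fixes f g :: "'a \<Rightarrow> real"
  assumes "0 < c" and "\<And>q. q \<in> P \<Longrightarrow> g q = c * f q + d" and "p \<in> P"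
  shows "(\<forall>q\<in>P. f p \<le> f q) \<longleftrightarrow> (\<forall>q\<in>P. g p \<le> g q)"
  using assms by auto

locale closed_loop_model = prob_space M
  for M :: "'w measure" +
  fixes A :: "real^'n^'n" and B :: "real^'m^'n" and Q W M0 :: "real^'n^'n" and R :: "real^'m^'m"
    and m0 :: "real^'n" and N :: nat
    and X0 :: "'w \<Rightarrow> real^'n" and Wn :: "nat \<Rightarrow> 'w \<Rightarrow> real^'n"
    and Tau :: "nat \<Rightarrow> 'w \<Rightarrow> nat" and V :: "nat \<Rightarrow> 'w \<Rightarrow> real"
  assumes Q_psd: "psd_matrix Q"
    and R_sym: "transpose R = R" and R_pos: "\<forall>z. z \<noteq> 0 \<longrightarrow> 0 < qf R z"
    and W_nonneg: "\<forall>z. 0 \<le> qf W z" and M0_nonneg: "\<forall>z. 0 \<le> qf M0 z"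
    and X0_gaussian: "gaussian_vec M X0 m0 M0" and noise_gaussian: "\<And>k. gaussian_vec M (Wn k) 0 W"
    and Tau_measurable: "\<And>k. Tau k \<in> measurable M (count_space UNIV)"
    and V_measurable: "\<And>k. V k \<in> borel_measurable M"
    and sources_indep: "indep_sets (src_events M X0 Wn Tau V) UNIV"
begin

abbreviation "S \<equiv> riccS A B Q R N"

abbreviation partial_run ::
  "(nat \<Rightarrow> (nat \<Rightarrow> ('n, 'm) infoval) \<Rightarrow> real) \<Rightarrow> nat \<Rightarrow> 'w \<Rightarrow> ('n, 'm) hist" where
  "partial_run p n \<equiv> random_run A B (gainL A B Q R N) m0 X0 Wn Tau V p n"

abbreviation trajectory :: "(nat \<Rightarrow> (nat \<Rightarrow> ('n, 'm) infoval) \<Rightarrow> real) \<Rightarrow> 'w \<Rightarrow> ('n, 'm) hist" where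
  "trajectory p \<equiv> partial_run p (Suc N)"

lemma traj_eq_trajectory: "traj A B Q R N m0 X0 Wn Tau V p = trajectory p"
  by (simp add: traj_def random_run_def fun_eq_iff)

lemma X0_measurable[measurable]: "X0 \<in> borel_measurable M"
  using X0_gaussian by (simp add: gaussian_vec_def)

lemma noise_measurable[measurable]: "Wn k \<in> borel_measurable M"
  using noise_gaussian by (simp add: gaussian_vec_def)

text \<open>All closed-loop quantities grow at most linearly in \<open>source_size\<close>, whose square is integrable.\<close>

definition source_size :: "'w \<Rightarrow> real" where
  "source_size \<omega> = sqrt (1 + (norm (X0 \<omega>))\<^sup>2 + (\<Sum>j\<le>N. (norm (Wn j \<omega>))\<^sup>2))"

lemma source_size_square: "(source_size \<omega>)\<^sup>2 = 1 + (norm (X0 \<omega>))\<^sup>2 + (\<Sum>j\<le>N. (norm (Wn j \<omega>))\<^sup>2)"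
  unfolding source_size_def by (simp add: sum_nonneg add_nonneg_nonneg)

lemma one_le_source_size: "1 \<le> source_size \<omega>"
  unfolding source_size_def by (simp add: sum_nonneg)

lemma source_size_nonneg: "0 \<le> source_size \<omega>"
  by (rule order_trans[OF zero_le_one one_le_source_size])

lemma one_le_source_size_square: "1 \<le> (source_size \<omega>)\<^sup>2"
  using one_le_source_size[of \<omega>] by (simp add: one_le_power)

lemma source_size_le_square: "source_size \<omega> \<le> (source_size \<omega>)\<^sup>2"
  using one_le_source_size[of \<omega>] by (simp add: power2_eq_square)

lemma norm_X0_le_source_size: "norm (X0 \<omega>) \<le> source_size \<omega>"
  unfolding source_size_def by (rule real_le_rsqrt) (simp add: sum_nonneg)

lemma norm_noise_le_source_size:
  assumes "j \<le> N"
  shows "norm (Wn j \<omega>) \<le> source_size \<omega>"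
  unfolding source_size_def
proof (rule real_le_rsqrt)
  have "(norm (Wn j \<omega>))\<^sup>2 \<le> (\<Sum>j\<le>N. (norm (Wn j \<omega>))\<^sup>2)"
    using assms by (intro member_le_sum) auto
  then show "(norm (Wn j \<omega>))\<^sup>2 \<le> 1 + (norm (X0 \<omega>))\<^sup>2 + (\<Sum>j\<le>N. (norm (Wn j \<omega>))\<^sup>2)"
    using zero_le_power2[of "norm (X0 \<omega>)"] by linarith
qed

lemma integrable_source_size_square: "integrable M (\<lambda>\<omega>. (source_size \<omega>)\<^sup>2)"
proof -
  have "integrable M (\<lambda>\<omega>. 1 + (\<Sum>i\<in>UNIV. (X0 \<omega> $ i)\<^sup>2) + (\<Sum>j\<le>N. \<Sum>i\<in>UNIV. (Wn j \<omega> $ i)\<^sup>2))"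
    using gaussian_vec_component_square_integrable[OF X0_gaussian M0_nonneg]
      gaussian_vec_component_square_integrable[OF noise_gaussian W_nonneg]
    by (intro Bochner_Integration.integrable_add Bochner_Integration.integrable_sum) auto
  then show ?thesis
    unfolding source_size_square power2_norm_eq_inner inner_vec_def by (simp add: power2_eq_square)
qed

lemma integrable_if_quadratically_bounded:
  fixes g :: "'w \<Rightarrow> real"
  assumes "g \<in> borel_measurable M" "linearly_bounded (\<lambda>\<omega>. (source_size \<omega>)\<^sup>2) g"
  shows "integrable M g"
  using integrable_source_size_square assms by (rule integrable_if_linearly_bounded)

lemma trajectory_measurable:
  assumes "p \<in> admissible N"
  shows "hist_measurable M (trajectory p)"
  using assms by (intro random_run_measurable Tau_measurable) (auto simp: admissible_def V_measurable)

lemma trajectory_linearly_bounded: "hist_linearly_bounded source_size (trajectory p)"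
  by (rule random_run_linearly_bounded)
    (simp_all add: one_le_source_size norm_X0_le_source_size norm_noise_le_source_size)

lemma partial_run_measurable_except_noise:
  assumes "p \<in> admissible N" "k \<le> N"
  shows "hist_measurable (sigma_except_noise M X0 Wn Tau V k) (partial_run p k)"
proof (rule random_run_measurable)
  let ?G = "sigma_except_noise M X0 Wn Tau V k"
  show "X0 \<in> borel_measurable ?G"
    by (rule measurable_sigma_except_noise[of _ _ _ _ _ _ _ SX0]) (auto simp: src_events_def)
  show "Wn j \<in> borel_measurable ?G" if "j < k" for j
    by (rule measurable_sigma_except_noise[of _ _ _ _ _ _ _ "SW j"]) (use that in \<open>auto simp: src_events_def\<close>)
  show "Tau j \<in> measurable ?G (count_space UNIV)" for j
    by (rule measurable_sigma_except_noise[of _ _ _ _ _ _ _ "STau j"])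
      (auto simp: src_events_def Tau_measurable)
  show "V j \<in> borel_measurable ?G" for j
    by (rule measurable_sigma_except_noise[of _ _ _ _ _ _ _ "SV j"]) (auto simp: src_events_def V_measurable)
  show "p j \<in> borel_measurable info_space" if "j < k" for j
    using assms that by (simp add: admissible_def)
qed

definition predicted_state ::
  "(nat \<Rightarrow> (nat \<Rightarrow> ('n, 'm) infoval) \<Rightarrow> real) \<Rightarrow> nat \<Rightarrow> 'w \<Rightarrow> real^'n" where
  "predicted_state p k \<omega> = S (Suc k) *v (A *v hx (trajectory p \<omega>) k + B *v hu (trajectory p \<omega>) k)"

lemma predicted_state_eq_partial_run:
  assumes "k \<le> N"
  shows "predicted_state p k \<omega> = S (Suc k) *v (A *v hx (partial_run p k \<omega>) k
      + B *v (- (gainL A B Q R N k *v hxh (partial_run p k \<omega>) k)))"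
proof -
  have "hu (trajectory p \<omega>) k = - (gainL A B Q R N k *v hxh (trajectory p \<omega>) k)"
    by (rule run_dynamics(2)[OF assms]) (simp add: random_run_def)
  moreover have "hx (trajectory p \<omega>) k = hx (partial_run p k \<omega>) k"
    "hxh (trajectory p \<omega>) k = hxh (partial_run p k \<omega>) k"
    unfolding random_run_def by (rule run_prefix_stable; use assms in simp)+
  ultimately show ?thesis by (simp add: predicted_state_def)
qed

lemma predicted_state_measurable_except_noise:
  assumes "p \<in> admissible N" "k \<le> N"
  shows "(\<lambda>\<omega>. predicted_state p k \<omega> $ i) \<in> borel_measurable (sigma_except_noise M X0 Wn Tau V k)"
proof -
  note [measurable] = hist_measurableD[OF partial_run_measurable_except_noise[OF assms]]
  show ?thesis unfolding predicted_state_eq_partial_run[OF assms(2)] by measurable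
qed

lemma predicted_state_measurable[measurable]:
  "p \<in> admissible N \<Longrightarrow> predicted_state p k \<in> borel_measurable M"
  using hist_measurableD[OF trajectory_measurable] unfolding predicted_state_def by measurable

lemma predicted_state_linearly_bounded: "linearly_bounded source_size (predicted_state p k)"
  unfolding predicted_state_def
  by (intro linearly_bounded_matrix_vector_mult linearly_bounded_add
      hist_linearly_boundedD[OF trajectory_linearly_bounded])

lemma integral_noise_inner_predicted_state:
  assumes p: "p \<in> admissible N" and k: "k \<le> N"
  shows "integrable M (\<lambda>\<omega>. Wn k \<omega> \<bullet> predicted_state p k \<omega>)"
    and "(\<integral>\<omega>. Wn k \<omega> \<bullet> predicted_state p k \<omega> \<partial>M) = 0"
proof -
  let ?y = "predicted_state p k"
  note y_bounded = linearly_bounded_vec_nth[OF predicted_state_linearly_bounded]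
  note W_bounded = linearly_bounded_vec_nth[OF linearly_bounded_of_norm_le[OF norm_noise_le_source_size[OF k]]]
  note noise_mean = gaussian_vec_component_expectation[OF noise_gaussian W_nonneg]
  have y_int: "integrable M (\<lambda>\<omega>. ?y \<omega> $ i)" for i
    using p by (intro integrable_if_quadratically_bounded linearly_bounded_mono[OF y_bounded]
        source_size_nonneg source_size_le_square) simp
  have prod_int: "integrable M (\<lambda>\<omega>. Wn k \<omega> $ i * ?y \<omega> $ i)" for i
    using p linearly_bounded_inner[OF W_bounded y_bounded]
    by (intro integrable_if_quadratically_bounded) simp_all
  have prod_zero: "(\<integral>\<omega>. Wn k \<omega> $ i * ?y \<omega> $ i \<partial>M) = 0" for i
  proof -
    have "indep_var borel (\<lambda>\<omega>. Wn k \<omega> $ i) borel (\<lambda>\<omega>. ?y \<omega> $ i)"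
      by (rule indep_var_noise_sigma_except_noise[where g="\<lambda>v. v $ i", OF sources_indep noise_measurable
            _ predicted_state_measurable_except_noise[OF p k]]) simp
    then have "(\<integral>\<omega>. Wn k \<omega> $ i * ?y \<omega> $ i \<partial>M) = (\<integral>\<omega>. Wn k \<omega> $ i \<partial>M) * (\<integral>\<omega>. ?y \<omega> $ i \<partial>M)"
      using noise_mean(1) y_int by (rule indep_var_lebesgue_integral)
    then show ?thesis by (simp add: noise_mean)
  qed
  have inner_eq: "(\<lambda>\<omega>. Wn k \<omega> \<bullet> ?y \<omega>) = (\<lambda>\<omega>. \<Sum>i\<in>UNIV. Wn k \<omega> $ i * ?y \<omega> $ i)"
    by (simp add: inner_vec_def)
  show "integrable M (\<lambda>\<omega>. Wn k \<omega> \<bullet> ?y \<omega>)"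
    unfolding inner_eq using prod_int by simp
  show "(\<integral>\<omega>. Wn k \<omega> \<bullet> ?y \<omega> \<partial>M) = 0"
    unfolding inner_eq using prod_int prod_zero by (simp add: Bochner_Integration.integral_sum)
qed

definition transmissions :: "(nat \<Rightarrow> (nat \<Rightarrow> ('n, 'm) infoval) \<Rightarrow> real) \<Rightarrow> 'w \<Rightarrow> real" where
  "transmissions p \<omega> = (\<Sum>k\<le>N. of_bool (hd (trajectory p \<omega>) k))"

definition error_cost :: "(nat \<Rightarrow> (nat \<Rightarrow> ('n, 'm) infoval) \<Rightarrow> real) \<Rightarrow> 'w \<Rightarrow> real" where
  "error_cost p \<omega> = (\<Sum>k\<le>N. qf (Gam A B Q R N k) (hx (trajectory p \<omega>) k - hxh (trajectory p \<omega>) k))"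

definition control_cost :: "(nat \<Rightarrow> (nat \<Rightarrow> ('n, 'm) infoval) \<Rightarrow> real) \<Rightarrow> 'w \<Rightarrow> real" where
  "control_cost p \<omega> = (\<Sum>k\<le>N. qf Q (hx (trajectory p \<omega>) (Suc k)) + qf R (hu (trajectory p \<omega>) k))"

definition cost_offset :: "'w \<Rightarrow> real" where
  "cost_offset \<omega> = qf (S 0) (X0 \<omega>) - qf Q (X0 \<omega>) + (\<Sum>k\<le>N. qf (S (Suc k)) (Wn k \<omega>))"

definition cross_cost :: "(nat \<Rightarrow> (nat \<Rightarrow> ('n, 'm) infoval) \<Rightarrow> real) \<Rightarrow> 'w \<Rightarrow> real" where
  "cross_cost p \<omega> = (\<Sum>k\<le>N. 2 * (Wn k \<omega> \<bullet> predicted_state p k \<omega>))"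

lemma control_cost_eq: "control_cost p \<omega> = cost_offset \<omega> + error_cost p \<omega> + cross_cost p \<omega>"
proof -
  have "control_cost p \<omega> = qf (S 0) (X0 \<omega>) - qf Q (X0 \<omega>)
      + (\<Sum>k\<le>N. qf (Gam A B Q R N k) (hx (trajectory p \<omega>) k - hxh (trajectory p \<omega>) k)
        + 2 * (Wn k \<omega> \<bullet> (S (Suc k) *v (A *v hx (trajectory p \<omega>) k + B *v hu (trajectory p \<omega>) k)))
        + qf (S (Suc k)) (Wn k \<omega>))"
    unfolding control_cost_def
    by (rule closed_loop_cost_identity[OF Q_psd R_sym R_pos]) (simp add: random_run_def)
  then show ?thesis
    by (simp add: cost_offset_def error_cost_def cross_cost_def predicted_state_def sum.distrib)
qed

lemma Psi_eq_integral:
  "Psi M A B Q R N lam ell m0 X0 Wn Tau V p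
    = (\<integral>\<omega>. ell * (1 - lam) / lam * transmissions p \<omega> + error_cost p \<omega> \<partial>M)"
  by (simp add: Psi_def traj_eq_trajectory transmissions_def error_cost_def sum.distrib
      sum_distrib_left Let_def mult.commute)

lemma Phi_eq_integral:
  "Phi M A B Q R N lam ell m0 X0 Wn Tau V p
    = (\<integral>\<omega>. (1 - lam) / real (N + 1) * (ell * transmissions p \<omega>) + lam / real (N + 1) * control_cost p \<omega> \<partial>M)"
  by (simp add: Phi_def traj_eq_trajectory transmissions_def control_cost_def sum_distrib_left Let_def
      mult.commute)

lemma integrable_transmissions:
  assumes "p \<in> admissible N"
  shows "integrable M (transmissions p)"
proof (rule integrable_if_quadratically_bounded)
  note [measurable] = hist_measurableD[OF trajectory_measurable[OF assms]]
  show "transmissions p \<in> borel_measurable M" unfolding transmissions_def by measurable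
  have "norm (transmissions p \<omega>) \<le> real (N + 1)" for \<omega>
  proof -
    have "0 \<le> transmissions p \<omega>" "transmissions p \<omega> \<le> (\<Sum>k\<le>N. 1)"
      unfolding transmissions_def by (intro sum_nonneg sum_mono; simp)+
    then show ?thesis by simp
  qed
  then show "linearly_bounded (\<lambda>\<omega>. (source_size \<omega>)\<^sup>2) (transmissions p)"
    by (rule bounded_imp_linearly_bounded[OF _ one_le_source_size_square])
qed

lemma integrable_error_cost:
  assumes "p \<in> admissible N"
  shows "integrable M (error_cost p)"
proof (rule integrable_if_quadratically_bounded)
  note [measurable] = hist_measurableD[OF trajectory_measurable[OF assms]]
  show "error_cost p \<in> borel_measurable M" unfolding error_cost_def by measurable
  show "linearly_bounded (\<lambda>\<omega>. (source_size \<omega>)\<^sup>2) (error_cost p)"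
    unfolding error_cost_def
    by (intro linearly_bounded_sum linearly_bounded_qf linearly_bounded_diff
        hist_linearly_boundedD[OF trajectory_linearly_bounded])
qed

lemma integrable_cost_offset: "integrable M cost_offset"
proof (rule integrable_if_quadratically_bounded)
  show "cost_offset \<in> borel_measurable M" unfolding cost_offset_def by measurable
  show "linearly_bounded (\<lambda>\<omega>. (source_size \<omega>)\<^sup>2) cost_offset"
    unfolding cost_offset_def
    by (intro linearly_bounded_add linearly_bounded_diff linearly_bounded_sum linearly_bounded_qf
        linearly_bounded_of_norm_le[OF norm_X0_le_source_size]
        linearly_bounded_of_norm_le[OF norm_noise_le_source_size]) simp
qed

lemma integral_cross_cost:
  assumes "p \<in> admissible N"
  shows "integrable M (cross_cost p)" and "(\<integral>\<omega>. cross_cost p \<omega> \<partial>M) = 0"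
proof -
  note noise_cross = integral_noise_inner_predicted_state[OF assms]
  show "integrable M (cross_cost p)"
    unfolding cross_cost_def using noise_cross(1)
    by (intro Bochner_Integration.integrable_sum integrable_mult_right) auto
  show "(\<integral>\<omega>. cross_cost p \<omega> \<partial>M) = 0"
    unfolding cross_cost_def using noise_cross
    by (subst Bochner_Integration.integral_sum) auto
qed

lemma Phi_eq_affine_Psi:
  assumes p: "p \<in> admissible N" and lam: "0 < lam"
  shows "Phi M A B Q R N lam ell m0 X0 Wn Tau V p
    = lam / real (N + 1) * Psi M A B Q R N lam ell m0 X0 Wn Tau V p
      + lam / real (N + 1) * (\<integral>\<omega>. cost_offset \<omega> \<partial>M)"
proof -
  define c where "c = lam / real (N + 1)"
  have coeff: "(1 - lam) / real (N + 1) * (ell * x) = c * (ell * (1 - lam) / lam * x)" for x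
    using lam by (simp add: c_def)
  have "(1 - lam) / real (N + 1) * (ell * transmissions p \<omega>) + c * control_cost p \<omega>
      = c * (ell * (1 - lam) / lam * transmissions p \<omega> + error_cost p \<omega>) + c * cost_offset \<omega>
        + c * cross_cost p \<omega>" for \<omega>
    unfolding coeff control_cost_eq by (simp add: algebra_simps)
  then have "Phi M A B Q R N lam ell m0 X0 Wn Tau V p
      = (\<integral>\<omega>. c * (ell * (1 - lam) / lam * transmissions p \<omega> + error_cost p \<omega>) + c * cost_offset \<omega>
        + c * cross_cost p \<omega> \<partial>M)"
    by (simp add: Phi_eq_integral c_def)
  also have "\<dots> = c * Psi M A B Q R N lam ell m0 X0 Wn Tau V p + c * (\<integral>\<omega>. cost_offset \<omega> \<partial>M)"
    using integrable_transmissions[OF p] integrable_error_cost[OF p] integrable_cost_offset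
      integral_cross_cost[OF p]
    by (simp add: Psi_eq_integral)
  finally show ?thesis by (simp add: c_def)
qed

end

theorem lemma7:
  fixes A :: "real^'n^'n" and B :: "real^'m^'n" and Q W M0 :: "real^'n^'n" and R :: "real^'m^'m"
    and m0 :: "real^'n" and N :: nat and lam ell :: real
    and M :: "'w measure" and X0 :: "'w \<Rightarrow> real^'n" and Wn :: "nat \<Rightarrow> 'w \<Rightarrow> real^'n"
    and Tau :: "nat \<Rightarrow> 'w \<Rightarrow> nat" and V :: "nat \<Rightarrow> 'w \<Rightarrow> real"
  assumes "prob_space M"
    and "0 < lam" and "lam < 1"
    and "transpose Q = Q" and "\<forall>z. 0 \<le> qf Q z"
    and "transpose R = R" and "\<forall>z. z \<noteq> 0 \<longrightarrow> 0 < qf R z"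
    and "transpose W = W" and "\<forall>z. z \<noteq> 0 \<longrightarrow> 0 < qf W z"
    and "transpose M0 = M0" and "\<forall>z. 0 \<le> qf M0 z"
    and "gaussian_vec M X0 m0 M0"
    and "\<forall>k. gaussian_vec M (Wn k) 0 W"
    and "\<forall>k. Tau k \<in> measurable M (count_space UNIV)"
    and "AE \<omega> in M. Tau 0 \<omega> = 0"
    and "\<forall>k. V k \<in> borel_measurable M \<and> distr M borel (V k) = uniform_measure lborel {0..1}"
    and "prob_space.indep_sets M (src_events M X0 Wn Tau V) UNIV"
  shows "\<forall>p \<in> (admissible N :: (nat \<Rightarrow> (nat \<Rightarrow> ('n, 'm) infoval) \<Rightarrow> real) set).
           (\<forall>q \<in> admissible N. Psi M A B Q R N lam ell m0 X0 Wn Tau V p \<le> Psi M A B Q R N lam ell m0 X0 Wn Tau V q)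
       \<longleftrightarrow> (\<forall>q \<in> admissible N. Phi M A B Q R N lam ell m0 X0 Wn Tau V p \<le> Phi M A B Q R N lam ell m0 X0 Wn Tau V q)"
proof -
  \<comment> \<open>Unused: \<open>lam < 1\<close>, the symmetry of \<open>W\<close> and \<open>M0\<close> (only the signs of their quadratic forms
    matter), the condition on \<open>Tau 0\<close> and the law of \<open>V\<close> (the affine relation between the losses
    holds for every law of the delays and of the randomisation).\<close>
  have "0 \<le> qf W z" for z
    using assms(9) by (cases "z = 0") (auto simp: qf_def less_imp_le)
  then interpret closed_loop_model M A B Q W M0 R m0 N X0 Wn Tau V
    by (intro closed_loop_model.intro closed_loop_model_axioms.intro)
      (use assms in \<open>simp_all add: psd_matrix_def\<close>)
  have affine: "Phi M A B Q R N lam ell m0 X0 Wn Tau V q = lam / real (N + 1) * Psi M A B Q R N lam ell m0 X0 Wn Tau V q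
      + lam / real (N + 1) * (\<integral>\<omega>. cost_offset \<omega> \<partial>M)" if "q \<in> admissible N" for q
    using that assms(2) by (rule Phi_eq_affine_Psi)
  show ?thesis
    using assms(2) by (intro ballI minimizer_iff_of_affine[OF _ affine]) simp_all
qed

end
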